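(* Let $\mathcal{T}$ be a triangulation of genus $g$ with root-face $(v_0,v_1,v_2)$, and run the procedure ComputeSchnyderAnyGenus on $\mathcal{T}$. At any step strictly before termination (i.e., while $C\neq\mathcal{T}$), there exists an update-candidate incident to the boundary face of $C$ containing the edge $\{v_0,v_1\}$ (that is, a free boundary corner on that boundary face, or a split or merge edge having a brin exterior to a boundary corner on that boundary face). Consequently the procedure ComputeSchnyderAnyGenus terminates.
   Context: $\mathcal{T}$ is a graph without loops or multiple edges cellularly embedded in the closed orientable surface of genus $g$, all faces of degree 3, with a marked root-face $(v_0,v_1,v_2)$. Each edge consists of two brins (half-edges), one at each endpoint. A subcomplex $C=(V',E',F')$ of $\mathcal{T}$ consists of subsets of vertices, edges, faces such that the edges of each face in $F'$ lie in $E'$ and the endpoints of each edge in $E'$ lie in $V'$; it is connected if $(V',E')$ is connected. $C$ inherits the cyclic order of brins around vertices, hence facial walks; those not bounding a face of $F'$ are boundary walks, and gluing a disk to each boundary walk gives the boundary faces of $C$. For a brin $h$ on a boundary walk with origin $v$, the boundary corner at $h$ is the pair $(h,h')$ where $h'$ is the next brin of $C$ after $h$ in clockwise (cw) order around $v$; the brins of $\mathcal{T}$ strictly between $h$ and $h'$ in cw order are the exterior brins of the corner, their edges the exterior edges, and the faces of $\mathcal{T}$ around $v$ between $h$ and $h'$ are its exterior faces. The complementary dual $D$ of $C$ is the subcomplex of the dual map $\mathcal{T}^*$ formed by the duals of the faces, edges and vertices of $\mathcal{T}$ not in $C$. A chordal edge is an edge of $\mathcal{T}$ not in $C$ whose two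 brins are both exterior brins of boundary corners of $C$. A boundary corner is free if none of its exterior edges is chordal; by convention the boundary corners delimited by the edge $\{v_0,v_1\}$ are never considered free. A chordal edge $e$ is separating if its dual edge $e^*$ is a bridge of $D$. A split edge is a non-separating chordal edge whose two brins are exterior brins of boundary corners on the same boundary face of $C$. A merge edge is a chordal edge whose two brins are exterior brins of boundary corners on two distinct boundary faces of $C$. An update-candidate is a free boundary corner, a split edge, or a merge edge. Operations: conquer$(b)$ adds to $C$ all exterior faces of the free corner $b$, with their edges and vertices. colorient$(b)$: with $v$ the vertex of $b$ and $e,e'$ the two edges of $C$ delimiting $b$ ($e'$ after $e$ in cw order around $v$), orient $e,e'$ out of $v$, give $e$ color 1 and $e'$ color 0, and orient all exterior edges of $b$ toward $v$ with color 2 (edges of the root-face are not colored or oriented). split$(e)$ / merge$(e)$ for a split/merge edge $e$: double $e$ into two parallel edges bounding a face of degree 2 and add these two edges and this face to $C$ ($e$ becomes a special edge). ComputeSchnyderAnyGenus$(\mathcal{T})$: initialize $C$ as the root-face with its edges and vertices; while $C\neq\mathcal{T}$, find any update-candidate $\sigma$; if $\sigma$ is a free corner $b$, perform conquer$(b)$ then colorient$(b)$; if $\sigma$ is a merge edge perform merge; if it is a split edge perform split (no priority among the three types). *)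

theory Defs
  imports Main
begin

(* Combinatorial maps (rotation systems) on a dart ("brin") set.
   alph = edge involution (the two brins of an edge),
   sigm = clockwise rotation of brins around their origin vertex.
   A dart d also names the angle (corner of the map) at its origin between d
   and sigm d; the face lying in that angle is the orbit of d under
   phi = alph o sigm. *)

record 'd cmap =
  darts :: "'d set"
  alph  :: "'d \<Rightarrow> 'd"
  sigm  :: "'d \<Rightarrow> 'd"

definition orb :: "('d \<Rightarrow> 'd) \<Rightarrow> 'd \<Rightarrow> 'd set" where
  "orb f x = {(f ^^ n) x | n. True}"

definition phi :: "'d cmap \<Rightarrow> 'd \<Rightarrow> 'd" where
  "phi M = alph M \<circ> sigm M"

definition vertex :: "'d cmap \<Rightarrow> 'd \<Rightarrow> 'd set" where
  "vertex M d = orb (sigm M) d"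

definition edge :: "'d cmap \<Rightarrow> 'd \<Rightarrow> 'd set" where
  "edge M d = {d, alph M d}"

definition face :: "'d cmap \<Rightarrow> 'd \<Rightarrow> 'd set" where
  "face M d = orb (phi M) d"

definition verts :: "'d cmap \<Rightarrow> 'd set set" where
  "verts M = vertex M ` darts M"

definition edges :: "'d cmap \<Rightarrow> 'd set set" where
  "edges M = edge M ` darts M"

definition faces :: "'d cmap \<Rightarrow> 'd set set" where
  "faces M = face M ` darts M"

definition comb_map :: "'d cmap \<Rightarrow> bool" where
  "comb_map M \<longleftrightarrow> finite (darts M)
     \<and> bij_betw (alph M) (darts M) (darts M)
     \<and> (\<forall>d\<in>darts M. alph M (alph M d) = d \<and> alph M d \<noteq> d)
     \<and> bij_betw (sigm M) (darts M) (darts M)"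

definition map_connected :: "'d cmap \<Rightarrow> bool" where
  "map_connected M \<longleftrightarrow> (\<forall>x\<in>darts M. \<forall>y\<in>darts M.
     (x, y) \<in> ({(d, alph M d) | d. d \<in> darts M} \<union> {(d, sigm M d) | d. d \<in> darts M})\<^sup>*)"

definition simple_map :: "'d cmap \<Rightarrow> bool" where
  "simple_map M \<longleftrightarrow> (\<forall>d\<in>darts M. alph M d \<notin> vertex M d)
     \<and> (\<forall>d\<in>darts M. \<forall>d'\<in>darts M.
          vertex M d = vertex M d' \<and> vertex M (alph M d) = vertex M (alph M d')
          \<longrightarrow> edge M d = edge M d')"

definition has_genus :: "'d cmap \<Rightarrow> nat \<Rightarrow> bool" where
  "has_genus M g \<longleftrightarrow>
     int (card (verts M)) - int (card (edges M)) + int (card (faces M)) = 2 - 2 * int g"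

definition triangulation :: "'d cmap \<Rightarrow> nat \<Rightarrow> bool" where
  "triangulation M g \<longleftrightarrow> comb_map M \<and> map_connected M \<and> simple_map M
     \<and> has_genus M g \<and> (\<forall>d\<in>darts M. card (face M d) = 3)"

type_synonym 'd cplx = "'d set set \<times> 'd set set \<times> 'd set set"

definition cV :: "'d cplx \<Rightarrow> 'd set set" where "cV C = fst C"
definition cE :: "'d cplx \<Rightarrow> 'd set set" where "cE C = fst (snd C)"
definition cF :: "'d cplx \<Rightarrow> 'd set set" where "cF C = snd (snd C)"

definition full_cplx :: "'d cmap \<Rightarrow> 'd cplx" where
  "full_cplx M = (verts M, edges M, faces M)"

definition nxt :: "'d cmap \<Rightarrow> 'd cplx \<Rightarrow> 'd \<Rightarrow> nat" where
  "nxt M C h = (LEAST k. 0 < k \<and> edge M ((sigm M ^^ k) h) \<in> cE C)"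

(* inherited rotation of C *)
definition sigC :: "'d cmap \<Rightarrow> 'd cplx \<Rightarrow> 'd \<Rightarrow> 'd" where
  "sigC M C h = (sigm M ^^ nxt M C h) h"

definition walk :: "'d cmap \<Rightarrow> 'd cplx \<Rightarrow> 'd \<Rightarrow> 'd set" where
  "walk M C h = orb (alph M \<circ> sigC M C) h"

(* h is a brin on a boundary walk; the boundary corner at h is (h, sigC M C h);
   the boundary face it lies on is identified with walk M C h *)
definition bcorner :: "'d cmap \<Rightarrow> 'd cplx \<Rightarrow> 'd \<Rightarrow> bool" where
  "bcorner M C h \<longleftrightarrow> h \<in> darts M \<and> edge M h \<in> cE C \<and> walk M C h \<notin> cF C"

definition ext_brins :: "'d cmap \<Rightarrow> 'd cplx \<Rightarrow> 'd \<Rightarrow> 'd set" where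
  "ext_brins M C h = {(sigm M ^^ k) h | k. 0 < k \<and> k < nxt M C h}"

definition ext_faces :: "'d cmap \<Rightarrow> 'd cplx \<Rightarrow> 'd \<Rightarrow> 'd set set" where
  "ext_faces M C h = {face M ((sigm M ^^ k) h) | k. k < nxt M C h}"

definition is_ext :: "'d cmap \<Rightarrow> 'd cplx \<Rightarrow> 'd \<Rightarrow> 'd \<Rightarrow> bool" where
  "is_ext M C d h \<longleftrightarrow> bcorner M C h \<and> d \<in> ext_brins M C h"

definition chordal :: "'d cmap \<Rightarrow> 'd cplx \<Rightarrow> 'd set \<Rightarrow> bool" where
  "chordal M C e \<longleftrightarrow> e \<in> edges M \<and> e \<notin> cE C \<and> (\<forall>d\<in>e. \<exists>h. is_ext M C d h)"

(* r is the root brin: root face = face M r, edge {v0,v1} = edge M r *)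
definition free_corner :: "'d cmap \<Rightarrow> 'd \<Rightarrow> 'd cplx \<Rightarrow> 'd \<Rightarrow> bool" where
  "free_corner M r C h \<longleftrightarrow> bcorner M C h
     \<and> (\<forall>d\<in>ext_brins M C h. \<not> chordal M C (edge M d))
     \<and> h \<notin> edge M r \<and> sigC M C h \<notin> edge M r"

(* dual edge e* is a bridge of the complementary dual D *)
definition separating :: "'d cmap \<Rightarrow> 'd cplx \<Rightarrow> 'd set \<Rightarrow> bool" where
  "separating M C e \<longleftrightarrow> chordal M C e \<and>
     (\<exists>d\<in>e. (face M d, face M (alph M d)) \<notin>
        {(face M x, face M (alph M x)) | x.
            x \<in> darts M \<and> edge M x \<notin> cE C \<and> edge M x \<noteq> e}\<^sup>*)"

definition split_edge :: "'d cmap \<Rightarrow> 'd cplx \<Rightarrow> 'd set \<Rightarrow> bool" where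
  "split_edge M C e \<longleftrightarrow> chordal M C e \<and> \<not> separating M C e \<and>
     (\<exists>d h d' h'. d \<in> e \<and> d' \<in> e \<and> d \<noteq> d' \<and> is_ext M C d h \<and> is_ext M C d' h'
        \<and> walk M C h = walk M C h')"

definition merge_edge :: "'d cmap \<Rightarrow> 'd cplx \<Rightarrow> 'd set \<Rightarrow> bool" where
  "merge_edge M C e \<longleftrightarrow> chordal M C e \<and>
     (\<exists>d h d' h'. d \<in> e \<and> d' \<in> e \<and> d \<noteq> d' \<and> is_ext M C d h \<and> is_ext M C d' h'
        \<and> walk M C h \<noteq> walk M C h')"

definition conquer :: "'d cmap \<Rightarrow> 'd cplx \<Rightarrow> 'd \<Rightarrow> 'd cplx" where
  "conquer M C h =
     (let Fn = ext_faces M C h;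
          En = {edge M d | d f. f \<in> Fn \<and> d \<in> f};
          Vn = {vertex M x | x. x \<in> \<Union> En}
      in (cV C \<union> Vn, cE C \<union> En, cF C \<union> Fn))"

(* split/merge: doubling e and adding the digon is modelled by adding e to C
   (it becomes a special edge) *)
definition double_edge :: "'d cmap \<Rightarrow> 'd cplx \<Rightarrow> 'd set \<Rightarrow> 'd cplx" where
  "double_edge M C e = (cV C, insert e (cE C), cF C)"

definition init_cplx :: "'d cmap \<Rightarrow> 'd \<Rightarrow> 'd cplx" where
  "init_cplx M r =
     (let Er = edge M ` face M r in ({vertex M x | x. x \<in> \<Union> Er}, Er, {face M r}))"

(* one iteration of ComputeSchnyderAnyGenus (colorient does not affect C) *)
definition alg_step :: "'d cmap \<Rightarrow> 'd \<Rightarrow> 'd cplx \<Rightarrow> 'd cplx \<Rightarrow> bool" where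
  "alg_step M r C C' \<longleftrightarrow> C \<noteq> full_cplx M \<and>
     ((\<exists>h. free_corner M r C h \<and> C' = conquer M C h)
      \<or> (\<exists>e. split_edge M C e \<and> C' = double_edge M C e)
      \<or> (\<exists>e. merge_edge M C e \<and> C' = double_edge M C e))"

definition root_candidate :: "'d cmap \<Rightarrow> 'd \<Rightarrow> 'd cplx \<Rightarrow> bool" where
  "root_candidate M r C \<longleftrightarrow> (\<exists>h0\<in>edge M r. bcorner M C h0 \<and>
     ((\<exists>h. free_corner M r C h \<and> walk M C h = walk M C h0)
      \<or> (\<exists>e d h. (split_edge M C e \<or> merge_edge M C e) \<and> d \<in> e
            \<and> is_ext M C d h \<and> walk M C h = walk M C h0)))"

end

theory Submission
  imports Defs
begin

text \<open>The procedure maintains an invariant: C is a subcomplex containing the root face, its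
  complementary dual is connected, and the face beyond the root edge stays outside C until the
  end. Conquering a free corner keeps the dual connected, because the outer neighbours of its fan
  are linked around the far ends of the exterior edges, which meet no edge of C. Doubling a
  non-separating chordal edge keeps it connected by definition, and a merge edge is never
  separating, since a separating edge crosses every boundary tour an even number of times. Each
  step adds an edge or a face, so the procedure terminates.

  For the candidate on the boundary face through the root edge, follow the tour of its corners.
  If there were no candidate, every corner away from the root edge would have a chordal exterior
  edge which, being neither a split nor a merge edge, is separating with both brins on this
  boundary face. Take one whose two crossings of the tour are closest. As the map has no loops
  or multiple edges, the crossings lie neither in the same nor in consecutive corners, so a whole
  corner lies strictly between them. Its separating edge crosses the tour twice in the same
  interval, because a separating edge splits the tour like a Jordan curve; this is a closer
  pair.\<close>

lemma funpow_add_apply: "(f ^^ (m + n)) x = (f ^^ m) ((f ^^ n) x)"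
  by (simp add: funpow_add)

definition period :: "('a \<Rightarrow> 'a) \<Rightarrow> 'a \<Rightarrow> nat" where
  "period f x = (LEAST n. 0 < n \<and> (f ^^ n) x = x)"

locale finite_perm =
  fixes f :: "'a \<Rightarrow> 'a" and S :: "'a set"
  assumes finite: "finite S" and maps: "\<And>x. x \<in> S \<Longrightarrow> f x \<in> S" and inj: "inj_on f S"
begin

lemma funpow_in: "x \<in> S \<Longrightarrow> (f ^^ n) x \<in> S"
  by (induction n) (auto intro: maps)

lemma inj_funpow: "inj_on (f ^^ n) S"
proof (induction n)
  case (Suc n)
  have "inj_on (f \<circ> (f ^^ n)) S"
    using Suc inj by (auto simp: inj_on_def funpow_in)
  then show ?case by (simp add: comp_def)
qed simp

lemma funpow_cancel: "x \<in> S \<Longrightarrow> y \<in> S \<Longrightarrow> (f ^^ n) x = (f ^^ n) y \<Longrightarrow> x = y"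
  using inj_funpow[of n] by (auto simp: inj_on_def)

lemma funpow_eq_shift:
  assumes "x \<in> S" "i \<le> j" "(f ^^ i) x = (f ^^ j) x"
  shows "(f ^^ (j - i)) x = x"
proof -
  have "(f ^^ i) ((f ^^ (j - i)) x) = (f ^^ i) x"
    using assms funpow_add_apply[of i "j - i" f x] by simp
  then show ?thesis using funpow_cancel funpow_in assms(1) by blast
qed

lemma exists_period:
  assumes "x \<in> S"
  shows "\<exists>n>0. (f ^^ n) x = x"
proof -
  let ?g = "\<lambda>k. (f ^^ k) x"
  have "?g ` {..card S} \<subseteq> S" using funpow_in assms by auto
  then have "card (?g ` {..card S}) \<le> card S"
    using finite by (simp add: card_mono)
  then have "\<not> inj_on ?g {..card S}"
    by (metis card_atMost card_image lessI not_le)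
  then obtain i j where "i < j" "?g i = ?g j"
    unfolding inj_on_def by (metis linorder_neqE_nat)
  then show ?thesis
    using funpow_eq_shift[OF assms, of i j] by (intro exI[of _ "j - i"]) auto
qed

lemma period_pos: "x \<in> S \<Longrightarrow> 0 < period f x"
  and period_fix: "x \<in> S \<Longrightarrow> (f ^^ period f x) x = x"
  using LeastI_ex[OF exists_period] unfolding period_def by blast+

lemma period_min: "0 < n \<Longrightarrow> n < period f x \<Longrightarrow> (f ^^ n) x \<noteq> x"
  unfolding period_def using not_less_Least by blast

lemma funpow_mod_period: "x \<in> S \<Longrightarrow> (f ^^ n) x = (f ^^ (n mod period f x)) x"
  using funpow_mod_eq period_fix by metis

lemma period_distinct:
  assumes x: "x \<in> S" and ij: "i < period f x" "j < period f x" "(f ^^ i) x = (f ^^ j) x"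
  shows "i = j"
proof -
  have "i = j" if "i \<le> j" "j < period f x" "(f ^^ i) x = (f ^^ j) x" for i j
    using funpow_eq_shift[OF x that(1,3)] period_min[of "j - i" x] that by fastforce
  then show ?thesis using ij by (metis nat_le_linear)
qed

lemma orb_eq:
  assumes x: "x \<in> S"
  shows "orb f x = (\<lambda>k. (f ^^ k) x) ` {..<period f x}"
proof -
  have "(f ^^ n) x \<in> (\<lambda>k. (f ^^ k) x) ` {..<period f x}" for n
    using funpow_mod_period[OF x, of n] period_pos[OF x] by (auto intro: image_eqI)
  then show ?thesis unfolding orb_def by auto
qed

lemma in_orb: "x \<in> orb f x"
  unfolding orb_def by (auto intro!: exI[of _ 0])

lemma orb_step: "y \<in> orb f x \<Longrightarrow> f y \<in> orb f x"
  unfolding orb_def by clarsimp (metis funpow.simps(2) o_apply)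

lemma orb_funpow: "(f ^^ n) x \<in> orb f x"
  unfolding orb_def by blast

lemma orb_sub: "x \<in> S \<Longrightarrow> orb f x \<subseteq> S"
  unfolding orb_def using funpow_in by blast

lemma orb_sym:
  assumes x: "x \<in> S" and y: "y \<in> orb f x"
  shows "orb f y = orb f x"
proof -
  obtain n where n: "y = (f ^^ n) x" using y unfolding orb_def by auto
  let ?P = "period f x"
  have "x = (f ^^ (?P - n mod ?P)) y"
    using funpow_mod_period[OF x, of n] period_fix[OF x] period_pos[OF x]
    by (simp add: n funpow_add_apply[symmetric])
  then show ?thesis
    unfolding orb_def n by (auto simp: funpow_add_apply[symmetric]) (metis funpow_add_apply)
qed

lemma card_orb: "x \<in> S \<Longrightarrow> card (orb f x) = period f x"
  using orb_eq period_distinct by (auto simp: card_image inj_on_def)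

end

lemma orb_agree_eq:
  assumes "\<And>y. y \<in> orb g x \<Longrightarrow> f y = g y"
  shows "orb f x = orb g x"
proof -
  have "(f ^^ n) x = (g ^^ n) x" for n
    using assms by (induction n) (auto simp: orb_def)
  then show ?thesis unfolding orb_def by auto
qed

locale rooted_triangulation =
  fixes M :: "'d cmap" and g :: nat and r :: 'd
  assumes triangulation: "triangulation M g" and r_in: "r \<in> darts M"
begin

abbreviation "D \<equiv> darts M"
abbreviation "a \<equiv> alph M"
abbreviation "s \<equiv> sigm M"
abbreviation "p \<equiv> phi M"

lemma comb_map_M: "comb_map M"
  using triangulation unfolding triangulation_def by blast

lemma finite_D: "finite D"
  and a_in: "x \<in> D \<Longrightarrow> a x \<in> D"
  and s_in: "x \<in> D \<Longrightarrow> s x \<in> D"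
  and a_a [simp]: "x \<in> D \<Longrightarrow> a (a x) = x"
  and a_neq: "x \<in> D \<Longrightarrow> a x \<noteq> x"
  and inj_a: "inj_on a D"
  and inj_s: "inj_on s D"
  using comb_map_M unfolding comb_map_def bij_betw_def by blast+

lemma p_eq: "p x = a (s x)"
  unfolding phi_def by simp

lemma p_in: "x \<in> D \<Longrightarrow> p x \<in> D"
  using a_in s_in p_eq by simp

lemma inj_p: "inj_on p D"
  unfolding inj_on_def p_eq using inj_a inj_s s_in by (auto simp: inj_on_def)

lemma a_inj: "x \<in> D \<Longrightarrow> y \<in> D \<Longrightarrow> a x = a y \<Longrightarrow> x = y"
  using inj_a by (auto simp: inj_on_def)

lemma s_inj: "x \<in> D \<Longrightarrow> y \<in> D \<Longrightarrow> s x = s y \<Longrightarrow> x = y"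
  using inj_s by (auto simp: inj_on_def)

lemma p_inj: "x \<in> D \<Longrightarrow> y \<in> D \<Longrightarrow> p x = p y \<Longrightarrow> x = y"
  using inj_p by (auto simp: inj_on_def)

sublocale S: finite_perm s D
  using finite_D s_in inj_s by unfold_locales auto

sublocale P: finite_perm p D
  using finite_D p_in inj_p by unfold_locales auto

lemma sn_in: "x \<in> D \<Longrightarrow> (s ^^ n) x \<in> D"
  using S.funpow_in .

lemma period_p: "x \<in> D \<Longrightarrow> period p x = 3"
  using triangulation P.card_orb unfolding triangulation_def face_def by simp

lemma p_p_p: "x \<in> D \<Longrightarrow> p (p (p x)) = x"
  using P.period_fix[of x] period_p by (simp add: numeral_3_eq_3)

lemma face_eq:
  assumes x: "x \<in> D"
  shows "face M x = {x, p x, p (p x)}"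
proof -
  have "face M x = (\<lambda>k. (p ^^ k) x) ` {..<3}"
    unfolding face_def using P.orb_eq x period_p by simp
  also have "{..<3::nat} = {0, 1, 2}" by auto
  finally show ?thesis by (simp add: numeral_2_eq_2)
qed

lemma in_face: "x \<in> face M x"
  unfolding face_def using P.in_orb .

lemma face_sym: "x \<in> D \<Longrightarrow> y \<in> face M x \<Longrightarrow> face M y = face M x"
  unfolding face_def using P.orb_sym by blast

lemma face_p: "x \<in> D \<Longrightarrow> face M (p x) = face M x"
  using face_sym face_eq by simp

lemma face_as: "x \<in> D \<Longrightarrow> face M (a (s x)) = face M x"
  using face_p p_eq by simp

lemma face_sub: "x \<in> D \<Longrightarrow> face M x \<subseteq> D"
  using face_eq p_in by auto

lemma face_iff: "x \<in> D \<Longrightarrow> y \<in> D \<Longrightarrow> face M x = face M y \<longleftrightarrow> y \<in> face M x"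
  using face_sym in_face by metis

lemma in_vertex: "x \<in> vertex M x"
  unfolding vertex_def using S.in_orb .

lemma vertex_sym: "x \<in> D \<Longrightarrow> y \<in> vertex M x \<Longrightarrow> vertex M y = vertex M x"
  unfolding vertex_def using S.orb_sym by blast

lemma vertex_s: "x \<in> D \<Longrightarrow> vertex M (s x) = vertex M x"
  using vertex_sym S.orb_step in_vertex unfolding vertex_def by blast

lemma vertex_sn: "x \<in> D \<Longrightarrow> vertex M ((s ^^ n) x) = vertex M x"
  using vertex_sym S.orb_funpow unfolding vertex_def by blast

lemma vertex_ssn: "x \<in> D \<Longrightarrow> vertex M (s ((s ^^ n) x)) = vertex M x"
  using vertex_sn[of x "Suc n"] by simp

lemma sn_in_vertex: "(s ^^ n) x \<in> vertex M x"
  using S.orb_funpow unfolding vertex_def .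

lemma simple_map_M: "simple_map M"
  using triangulation unfolding triangulation_def by blast

lemma vertex_a_neq: "x \<in> D \<Longrightarrow> vertex M (a x) \<noteq> vertex M x"
  using simple_map_M in_vertex unfolding simple_map_def by metis

lemma edge_a: "x \<in> D \<Longrightarrow> edge M (a x) = edge M x"
  unfolding edge_def by auto

lemma edge_eqD: "edge M x = edge M y \<Longrightarrow> x = y \<or> x = a y"
  unfolding edge_def by auto

lemma in_edge: "x \<in> edge M x"
  unfolding edge_def by auto

lemma chordalI:
  assumes "d \<in> D" "edge M d \<notin> cE C" "is_ext M C d h1" "is_ext M C (a d) h2"
  shows "chordal M C (edge M d)"
  unfolding chordal_def edges_def using assms by (auto simp: edge_def)

lemma dart_eq_if_ends_eq:
  assumes "d \<in> D" "d' \<in> D" "vertex M d = vertex M d'" "vertex M (a d) = vertex M (a d')"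
  shows "d = d'"
proof -
  have "edge M d = edge M d'"
    using simple_map_M assms unfolding simple_map_def by blast
  then have "d = d' \<or> d = a d'" using edge_eqD by blast
  moreover have "d \<noteq> a d'"
    using assms vertex_a_neq by auto
  ultimately show ?thesis by blast
qed

lemma s_neq:
  assumes y: "y \<in> D"
  shows "s y \<noteq> y"
proof
  assume sy: "s y = y"
  let ?z = "p (a y)"
  have ay: "a y \<in> D" using a_in y by simp
  have "a (s ?z) = y"
    using p_p_p[OF y] sy p_eq by simp
  then have "s ?z = a y"
    using a_a y by (metis a_in p_in ay s_in)
  then have "vertex M (a (s (a y))) = vertex M (s (a y))"
    using vertex_s p_in ay p_eq by metis
  then show False using vertex_a_neq s_in ay by metis
qed

lemma vertex_pp: "x \<in> D \<Longrightarrow> vertex M (p (p x)) = vertex M (a x)"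
proof -
  assume x: "x \<in> D"
  have "a (s (p (p x))) = x" using p_p_p[OF x] p_eq by simp
  then have "s (p (p x)) = a x" by (metis a_a a_in s_in p_in x)
  then show ?thesis using vertex_s p_in x by metis
qed

lemma face_one_per_vertex:
  assumes x: "x \<in> D" and y: "y \<in> face M x" "y' \<in> face M x"
    and v: "vertex M y = vertex M y'"
  shows "y = y'"
proof -
  have px: "p x \<in> D" using p_in x by simp
  have "vertex M (p x) \<noteq> vertex M x"
    using vertex_a_neq[OF s_in[OF x]] vertex_s[OF x] p_eq by simp
  moreover have "vertex M (p (p x)) \<noteq> vertex M (p x)"
    using vertex_a_neq[OF s_in[OF px]] vertex_s[OF px] p_eq by simp
  moreover have "vertex M (p (p x)) \<noteq> vertex M x"
    using vertex_pp[OF x] vertex_a_neq[OF x] by simp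
  ultimately show ?thesis using y v unfolding face_eq[OF x] by auto
qed

lemma a_notin_face:
  assumes x: "x \<in> D"
  shows "a x \<notin> face M x"
proof
  assume "a x \<in> face M x"
  then have "a x = x \<or> a x = p x \<or> a x = p (p x)" using face_eq x by simp
  moreover have "a x \<noteq> x" using a_neq x .
  moreover have "a x \<noteq> p x"
  proof
    assume "a x = p x"
    then have "x = s x" using a_inj x s_in p_eq by simp
    then show False using s_neq x by metis
  qed
  moreover have "a x \<noteq> p (p x)"
  proof
    assume "a x = p (p x)"
    then have "p (a x) = x" using p_p_p x by simp
    then have "a (s (a x)) = a (a x)" using p_eq x by simp
    then have "s (a x) = a x" using a_inj a_in s_in x by metis
    then show False using s_neq a_in x by metis
  qed
  ultimately show False by blast
qed

lemma face_a_neq: "x \<in> D \<Longrightarrow> face M (a x) \<noteq> face M x"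
  using a_notin_face face_sym in_face a_in by metis

end

definition dual_rel :: "'d cmap \<Rightarrow> 'd cplx \<Rightarrow> ('d set \<times> 'd set) set" where
  "dual_rel M C = {(face M x, face M (alph M x)) | x. x \<in> darts M \<and> edge M x \<notin> cE C}"

definition dual_connected :: "'d cmap \<Rightarrow> 'd cplx \<Rightarrow> bool" where
  "dual_connected M C \<longleftrightarrow> (\<forall>X\<in>faces M - cF C. \<forall>Y\<in>faces M - cF C. (X, Y) \<in> (dual_rel M C)\<^sup>*)"

text \<open>The tour of a boundary face: rotate around the current vertex through the exterior brins
  of the corner, and pass to the next corner by phi on reaching a brin of C. The orbit of a brin
  of C lists its boundary walk together with the exterior brins of all its corners.\<close>

definition tour_step :: "'d cmap \<Rightarrow> 'd cplx \<Rightarrow> 'd \<Rightarrow> 'd" where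
  "tour_step M C x = (if edge M (sigm M x) \<in> cE C then phi M x else sigm M x)"

locale subcomplex = rooted_triangulation M g r for M :: "'d cmap" and g r +
  fixes C :: "'d cplx"
  assumes cE_sub: "cE C \<subseteq> edges M" and cF_sub: "cF C \<subseteq> faces M"
    and cF_edges_in_cE: "\<And>f x. f \<in> cF C \<Longrightarrow> x \<in> f \<Longrightarrow> edge M x \<in> cE C"
begin

abbreviation "E \<equiv> cE C"
abbreviation "W \<equiv> alph M \<circ> sigC M C"
abbreviation "t \<equiv> tour_step M C"
abbreviation "CD \<equiv> {x \<in> darts M. edge M x \<in> cE C}"

lemma cE_dart: "edge M x \<in> E \<Longrightarrow> x \<in> D"
proof -
  assume "edge M x \<in> E"
  then obtain y where y: "y \<in> D" "edge M x = edge M y" using cE_sub unfolding edges_def by auto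
  then show "x \<in> D" using edge_eqD a_in by metis
qed

lemma nxt_ex:
  assumes h: "edge M h \<in> E"
  shows "\<exists>k. 0 < k \<and> edge M ((s ^^ k) h) \<in> E"
proof -
  have "h \<in> D" using cE_dart h .
  then show ?thesis using S.period_pos S.period_fix h by (intro exI[of _ "period s h"]) auto
qed

lemma nxt_prop:
  assumes h: "edge M h \<in> E"
  shows "0 < nxt M C h \<and> edge M ((s ^^ nxt M C h) h) \<in> E"
  unfolding nxt_def by (rule LeastI_ex) (rule nxt_ex[OF h])

lemma nxt_pos: "edge M h \<in> E \<Longrightarrow> 0 < nxt M C h"
  using nxt_prop by blast

lemma nxt_C: "edge M h \<in> E \<Longrightarrow> edge M ((s ^^ nxt M C h) h) \<in> E"
  using nxt_prop by blast

lemma nxt_min: "0 < k \<Longrightarrow> k < nxt M C h \<Longrightarrow> edge M ((s ^^ k) h) \<notin> E"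
  unfolding nxt_def using not_less_Least by blast

lemma nxt_eqI: "0 < k \<Longrightarrow> edge M ((s ^^ k) h) \<in> E
   \<Longrightarrow> (\<And>l. 0 < l \<Longrightarrow> l < k \<Longrightarrow> edge M ((s ^^ l) h) \<notin> E)
   \<Longrightarrow> nxt M C h = k"
  unfolding nxt_def by (rule Least_equality) (auto simp: not_less[symmetric])

lemma sigC_C: "edge M h \<in> E \<Longrightarrow> edge M (sigC M C h) \<in> E"
  unfolding sigC_def using nxt_C .

lemma sigC_in: "edge M h \<in> E \<Longrightarrow> sigC M C h \<in> D"
  using sigC_C cE_dart by blast

lemma vertex_sigC: "edge M h \<in> E \<Longrightarrow> vertex M (sigC M C h) = vertex M h"
  unfolding sigC_def using vertex_sn cE_dart by blast

lemma W_C: "edge M h \<in> E \<Longrightarrow> edge M (W h) \<in> E"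
  using sigC_C edge_a sigC_in by simp

lemma W_in: "edge M h \<in> E \<Longrightarrow> W h \<in> D"
  using W_C cE_dart by blast

lemma rotations_meet_eq:
  assumes h: "edge M h \<in> E" and h': "edge M h' \<in> E"
    and k: "0 < k" "k \<le> k'" "k' \<le> nxt M C h'" and eq: "(s ^^ k) h = (s ^^ k') h'"
  shows "h = h'"
proof -
  have hD: "h \<in> D" and h'D: "h' \<in> D" using cE_dart h h' by auto
  have "(s ^^ k) ((s ^^ (k' - k)) h') = (s ^^ k) h"
    using k eq funpow_add_apply[of k "k' - k" s h'] by simp
  then have e: "(s ^^ (k' - k)) h' = h" using S.funpow_cancel sn_in hD h'D by blast
  show ?thesis
  proof (cases "k' - k = 0")
    case False
    then have "edge M ((s ^^ (k' - k)) h') \<notin> E" using nxt_min k by simp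
    then show ?thesis using e h by simp
  qed (use e in simp)
qed

lemma sigC_inj:
  assumes h: "edge M h \<in> E" and h': "edge M h' \<in> E" and eq: "sigC M C h = sigC M C h'"
  shows "h = h'"
  using rotations_meet_eq[OF h h' nxt_pos[OF h] _ order_refl] rotations_meet_eq[OF h' h nxt_pos[OF h'] _ order_refl]
    eq nat_le_linear unfolding sigC_def by metis

sublocale WO: finite_perm W CD
proof
  show "finite CD" using finite_D by simp
  show "\<And>x. x \<in> CD \<Longrightarrow> W x \<in> CD" using W_C W_in by auto
  show "inj_on W CD"
  proof (rule inj_onI)
    fix x y assume "x \<in> CD" "y \<in> CD" "W x = W y"
    then have "sigC M C x = sigC M C y" using a_inj sigC_in by auto
    then show "x = y" using sigC_inj \<open>x \<in> CD\<close> \<open>y \<in> CD\<close> by blast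
  qed
qed

lemma walk_C: "edge M h \<in> E \<Longrightarrow> y \<in> walk M C h \<Longrightarrow> edge M y \<in> E"
  unfolding walk_def using WO.orb_sub[of h] cE_dart by blast

lemma walk_sym: "edge M h \<in> E \<Longrightarrow> y \<in> walk M C h \<Longrightarrow> walk M C y = walk M C h"
  unfolding walk_def using WO.orb_sym cE_dart by blast

lemma in_walk: "h \<in> walk M C h"
  unfolding walk_def using WO.in_orb .

lemma walk_W: "y \<in> walk M C h \<Longrightarrow> W y \<in> walk M C h"
  unfolding walk_def using WO.orb_step .

lemma t_in: "x \<in> D \<Longrightarrow> t x \<in> D"
  unfolding tour_step_def using p_in s_in by auto

lemma t_inj:
  assumes x: "x \<in> D" and y: "y \<in> D" and eq: "t x = t y"
  shows "x = y"
proof (cases "edge M (s x) \<in> E")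
  case True note tx = True
  show ?thesis
  proof (cases "edge M (s y) \<in> E")
    case True then show ?thesis using tx eq p_inj x y unfolding tour_step_def by auto
  next
    case False
    then have "p x = s y" using tx eq unfolding tour_step_def by auto
    then have "edge M (s y) = edge M (s x)" using p_eq edge_a s_in x by metis
    then show ?thesis using tx False by simp
  qed
next
  case False note tx = False
  show ?thesis
  proof (cases "edge M (s y) \<in> E")
    case True
    then have "p y = s x" using tx eq unfolding tour_step_def by auto
    then have "edge M (s y) = edge M (s x)" using p_eq edge_a s_in y by metis
    then show ?thesis using tx True by simp
  next
    case False then show ?thesis using tx eq s_inj x y unfolding tour_step_def by auto
  qed
qed

sublocale T: finite_perm t D
  using finite_D t_in t_inj by unfold_locales (auto simp: inj_on_def)

lemma t_s: "edge M (s x) \<notin> E \<Longrightarrow> t x = s x"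
  unfolding tour_step_def by simp

lemma t_p: "edge M (s x) \<in> E \<Longrightarrow> t x = p x"
  unfolding tour_step_def by simp

lemma face_t:
  assumes x: "x \<in> D" and "edge M (s x) \<in> E"
  shows "face M (t x) = face M x"
  using t_p assms face_p by simp

lemma t_corner:
  assumes h: "edge M h \<in> E" and k: "k < nxt M C h"
  shows "(t ^^ k) h = (s ^^ k) h"
  using k
proof (induction k)
  case 0 then show ?case by simp
next
  case (Suc k)
  then have "edge M ((s ^^ Suc k) h) \<notin> E" using nxt_min[of "Suc k" h] by blast
  then have "t ((s ^^ k) h) = (s ^^ Suc k) h" using t_s by simp
  then show ?case using Suc by simp
qed

lemma t_nxt:
  assumes h: "edge M h \<in> E"
  shows "(t ^^ nxt M C h) h = W h"
proof -
  obtain m where m: "nxt M C h = Suc m" using gr0_implies_Suc[OF nxt_pos[OF h]] by blast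
  have "(t ^^ m) h = (s ^^ m) h" using t_corner h m by simp
  moreover have "edge M (s ((s ^^ m) h)) \<in> E" using nxt_C[OF h] m by simp
  ultimately have "(t ^^ Suc m) h = p ((s ^^ m) h)" using t_p by simp
  also have "\<dots> = a ((s ^^ Suc m) h)" using p_eq by simp
  finally show ?thesis unfolding sigC_def using m by simp
qed

lemma face_cF_walk:
  assumes h: "h \<in> D" and f: "face M h \<in> cF C"
  shows "walk M C h = face M h"
proof -
  have "\<And>y. y \<in> orb p h \<Longrightarrow> W y = p y"
  proof -
    fix y assume y: "y \<in> orb p h"
    then have yf: "y \<in> face M h" unfolding face_def .
    have yD: "y \<in> D" using face_sub h yf by auto
    have py: "p y \<in> face M h" using P.orb_step y unfolding face_def .
    have "edge M (s y) = edge M (p y)" using p_eq edge_a s_in yD by simp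
    then have sE: "edge M (s y) \<in> E" using cF_edges_in_cE f py by simp
    have yE: "edge M y \<in> E" using cF_edges_in_cE f yf by simp
    have "nxt M C y = 1" using sE nxt_eqI[of 1 y] by simp
    then show "W y = p y" unfolding sigC_def using p_eq by simp
  qed
  then have "orb W h = orb p h" by (rule orb_agree_eq)
  then show ?thesis unfolding walk_def face_def .
qed

lemma walk_cF:
  assumes h: "edge M h \<in> E" and w: "walk M C h \<in> cF C"
  shows "face M h \<in> cF C \<and> nxt M C h = 1"
proof -
  have hD: "h \<in> D" using cE_dart h .
  obtain y where y: "y \<in> D" "walk M C h = face M y" using w cF_sub unfolding faces_def by auto
  have "h \<in> face M y" using in_walk y by metis
  then have fh: "face M h = face M y" using face_sym y by blast
  then have fc: "face M h \<in> cF C" using w y by simp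
  have "p h \<in> face M h" using face_eq hD by simp
  then have "edge M (p h) \<in> E" using cF_edges_in_cE fc by blast
  then have "edge M (s h) \<in> E" using p_eq edge_a s_in hD by metis
  then have "nxt M C h = 1" using nxt_eqI[of 1 h] by simp
  then show ?thesis using fc by simp
qed

lemma bcorner_of:
  assumes h: "edge M h \<in> E" and n: "1 < nxt M C h"
  shows "bcorner M C h"
proof -
  have "walk M C h \<notin> cF C" using walk_cF[OF h] n by auto
  then show ?thesis unfolding bcorner_def using h cE_dart by blast
qed

lemma ext_unique:
  assumes "d \<in> ext_brins M C h" "d \<in> ext_brins M C h'" "edge M h \<in> E" "edge M h' \<in> E"
  shows "h = h'"
proof -
  obtain k where k: "0 < k" "k < nxt M C h" "d = (s ^^ k) h"
    using assms(1) unfolding ext_brins_def by auto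
  obtain k' where k': "0 < k'" "k' < nxt M C h'" "d = (s ^^ k') h'"
    using assms(2) unfolding ext_brins_def by auto
  show ?thesis
  proof (cases "k \<le> k'")
    case True
    then show ?thesis using rotations_meet_eq[OF assms(3,4) k(1) True] k k' by simp
  next
    case False
    then show ?thesis using rotations_meet_eq[OF assms(4,3) k'(1), of k] k k' by simp
  qed
qed

lemma ext_not_C: "d \<in> ext_brins M C h \<Longrightarrow> edge M d \<notin> E"
  unfolding ext_brins_def using nxt_min by auto

lemma ext_in: "edge M h \<in> E \<Longrightarrow> d \<in> ext_brins M C h \<Longrightarrow> d \<in> D"
  unfolding ext_brins_def using sn_in cE_dart by auto

lemma ext_vertex: "edge M h \<in> E \<Longrightarrow> d \<in> ext_brins M C h \<Longrightarrow> vertex M d = vertex M h"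
  unfolding ext_brins_def using vertex_sn cE_dart by auto

end

lemma flips_parity:
  fixes b :: "nat \<Rightarrow> bool"
  shows "b n = (b 0 \<noteq> odd (card {i. i < n \<and> b (Suc i) \<noteq> b i}))"
proof (induction n)
  case 0 then show ?case by simp
next
  case (Suc n)
  have eq: "{i. i < Suc n \<and> b (Suc i) \<noteq> b i} =
      {i. i < n \<and> b (Suc i) \<noteq> b i} \<union> (if b (Suc n) \<noteq> b n then {n} else {})" by (auto simp: less_Suc_eq)
  show ?case
  proof (cases "b (Suc n) \<noteq> b n")
    case True
    then have "card {i. i < Suc n \<and> b (Suc i) \<noteq> b i} = Suc (card {i. i < n \<and> b (Suc i) \<noteq> b i})"
      unfolding eq by simp
    then show ?thesis using Suc True by auto
  next
    case False
    then have "{i. i < Suc n \<and> b (Suc i) \<noteq> b i} = {i. i < n \<and> b (Suc i) \<noteq> b i}"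
      unfolding eq by simp
    then show ?thesis using Suc False by auto
  qed
qed

lemma even_card_flips:
  fixes b :: "nat \<Rightarrow> bool"
  assumes "b n = b 0" shows "even (card {i. i < n \<and> b (Suc i) \<noteq> b i})"
  using flips_parity[of b n] assms by auto

context subcomplex begin

definition dual_rel_without :: "'d set \<Rightarrow> ('d set \<times> 'd set) set" where
  "dual_rel_without e = {(face M x, face M (a x)) | x. x \<in> D \<and> edge M x \<notin> E \<and> edge M x \<noteq> e}"

lemma dual_rel_without_sym: "(X, Y) \<in> dual_rel_without e \<Longrightarrow> (Y, X) \<in> dual_rel_without e"
proof -
  assume "(X, Y) \<in> dual_rel_without e"
  then obtain x where x: "x \<in> D" "edge M x \<notin> E" "edge M x \<noteq> e" "X = face M x" "Y = face M (a x)"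
    unfolding dual_rel_without_def by blast
  then have "(face M (a x), face M (a (a x))) \<in> dual_rel_without e"
    unfolding dual_rel_without_def using a_in edge_a by fastforce
  then show ?thesis using x by simp
qed

lemma separating_iff_dual_rel_without:
  "separating M C e \<longleftrightarrow>
     chordal M C e \<and> (\<exists>d\<in>e. (face M d, face M (a d)) \<notin> (dual_rel_without e)\<^sup>*)"
  unfolding separating_def dual_rel_without_def by simp

text \<open>Sides of a chordal edge e: lying in the same component as the face of d0 in the
  complementary dual without e. A step of the tour changes side exactly when it crosses e.\<close>

lemma tour_side_flip:
  assumes e: "e = edge M d0" "e \<notin> E" and d0: "d0 \<in> D"
    and nr: "(face M d0, face M (a d0)) \<notin> (dual_rel_without e)\<^sup>*" and x: "x \<in> D"
  shows "(((face M d0, face M (t x)) \<in> (dual_rel_without e)\<^sup>*)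
       \<noteq> ((face M d0, face M x) \<in> (dual_rel_without e)\<^sup>*))
     \<longleftrightarrow> s x \<in> e"
proof (cases "s x \<in> e")
  case True
  have sx: "s x \<in> D" using s_in x by simp
  have E1: "edge M (s x) \<notin> E" using True e edge_eqD edge_a d0 unfolding edge_def by auto
  then have tx: "t x = s x" using t_s by simp
  have fx: "face M x = face M (a (s x))" using face_as x by simp
  have "s x = d0 \<or> s x = a d0" using True e unfolding edge_def by auto
  then show ?thesis
  proof
    assume "s x = d0"
    then show ?thesis using tx fx nr True by simp
  next
    assume h: "s x = a d0"
    then have "face M x = face M d0" using fx d0 by simp
    moreover have "(face M d0, face M (a d0)) \<notin> (dual_rel_without e)\<^sup>*" using nr .
    ultimately show ?thesis using tx h True by simp
  qed
next
  case False
  show ?thesis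
  proof (cases "edge M (s x) \<in> E")
    case True
    then show ?thesis using face_t x False by simp
  next
    case notE: False
    then have tx: "t x = s x" using t_s by simp
    have "edge M (s x) \<noteq> e" using False in_edge by metis
    then have R: "(face M (s x), face M (a (s x))) \<in> dual_rel_without e"
      unfolding dual_rel_without_def using notE s_in x by blast
    have fx: "face M (a (s x)) = face M x" using face_as x by simp
    have "(face M (s x), face M x) \<in> dual_rel_without e" "(face M x, face M (s x)) \<in> dual_rel_without e"
      using R fx dual_rel_without_sym by auto
    then have "(face M d0, face M (s x)) \<in> (dual_rel_without e)\<^sup>*
        \<longleftrightarrow> (face M d0, face M x) \<in> (dual_rel_without e)\<^sup>*"
      using rtrancl_into_rtrancl by metis
    then show ?thesis using tx False by simp
  qed
qed

lemma chordal_edge: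
  assumes "chordal M C e" and "d0 \<in> e"
  shows "d0 \<in> D" "e = edge M d0" "e \<notin> E"
proof -
  obtain d1 where d1: "d1 \<in> D" "e = edge M d1"
    using assms unfolding chordal_def edges_def by auto
  then have "d0 = d1 \<or> d0 = a d1" using assms unfolding edge_def by auto
  then show "d0 \<in> D" using d1 a_in by auto
  show "e = edge M d0" using d1 \<open>d0 = d1 \<or> d0 = a d1\<close> edge_a by auto
  show "e \<notin> E" using assms unfolding chordal_def by blast
qed

end

locale boundary_tour = subcomplex M g r C for M :: "'d cmap" and g r C +
  fixes x0 :: 'd
  assumes x0E: "edge M x0 \<in> cE C"
begin

abbreviation "xs i \<equiv> (t ^^ i) x0"
abbreviation "N \<equiv> period t x0"

lemma x0D: "x0 \<in> D"
  using cE_dart x0E .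

lemma xs_in: "xs i \<in> D"
  using T.funpow_in x0D .

lemma N_pos: "0 < N"
  using T.period_pos x0D .

lemma xs_N: "xs N = x0"
  using T.period_fix x0D .

lemma xs_mod: "xs i = xs (i mod N)"
  using T.funpow_mod_period x0D .

lemma xs_inj: "i < N \<Longrightarrow> j < N \<Longrightarrow> xs i = xs j \<Longrightarrow> i = j"
  using T.period_distinct x0D by blast

lemma xs_add: "xs (i + j) = (t ^^ i) (xs j)"
  using funpow_add_apply .

lemma tour_corner_decomp:
  "\<exists>c\<le>i. edge M (xs c) \<in> E \<and> i - c < nxt M C (xs c) \<and> xs i = (s ^^ (i - c)) (xs c)
   \<and> xs c \<in> walk M C x0"
proof (induction i)
  case 0 then show ?case using x0E nxt_pos in_walk by auto
next
  case (Suc i)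
  then obtain c where c: "c \<le> i" "edge M (xs c) \<in> E" "i - c < nxt M C (xs c)"
    "xs i = (s ^^ (i - c)) (xs c)" "xs c \<in> walk M C x0" by blast
  show ?case
  proof (cases "Suc i - c < nxt M C (xs c)")
    case True
    have "edge M ((s ^^ Suc (i - c)) (xs c)) \<notin> E"
      using nxt_min[of "Suc (i - c)" "xs c"] True c by simp
    then have "t (xs i) = (s ^^ Suc (i - c)) (xs c)" using c t_s by simp
    moreover have "Suc (i - c) = Suc i - c" using c by simp
    ultimately show ?thesis using c True by (intro exI[of _ c]) auto
  next
    case False
    then have n: "nxt M C (xs c) = Suc (i - c)" using c by simp
    have "xs (Suc i) = xs (nxt M C (xs c) + c)" using n c by simp
    also have "\<dots> = W (xs c)" using xs_add t_nxt c by simp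
    finally have "xs (Suc i) = W (xs c)" .
    moreover have "edge M (W (xs c)) \<in> E" using W_C c by simp
    moreover have "W (xs c) \<in> walk M C x0" using walk_W c by simp
    ultimately show ?thesis using nxt_pos by (intro exI[of _ "Suc i"]) auto
  qed
qed

lemma tour_cE_in_walk:
  assumes "edge M (xs i) \<in> E"
  shows "xs i \<in> walk M C x0"
proof -
  obtain c where c: "c \<le> i" "edge M (xs c) \<in> E" "i - c < nxt M C (xs c)"
    "xs i = (s ^^ (i - c)) (xs c)" "xs c \<in> walk M C x0" using tour_corner_decomp by blast
  have "i - c = 0" using nxt_min[of "i - c" "xs c"] c assms by (cases "i - c = 0") auto
  then show ?thesis using c by simp
qed

lemma walk_in_tour:
  assumes y: "y \<in> walk M C x0"
  shows "\<exists>i<N. xs i = y"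
proof -
  obtain m where m: "y = (W ^^ m) x0" using y unfolding walk_def orb_def by auto
  have "\<exists>j. (W ^^ m) x0 = xs j"
  proof (induction m)
    case 0 then show ?case by (intro exI[of _ 0]) simp
  next
    case (Suc m)
    then obtain j where j: "(W ^^ m) x0 = xs j" by blast
    have "edge M ((W ^^ m) x0) \<in> E" using WO.funpow_in x0E x0D by simp
    then have "xs (nxt M C (xs j) + j) = W (xs j)" using xs_add t_nxt j by simp
    moreover have "(W ^^ Suc m) x0 = W (xs j)" using j by (simp only: funpow.simps(2) o_apply)
    ultimately show ?case by metis
  qed
  then obtain j where "y = xs j" using m by blast
  then show ?thesis using xs_mod N_pos by (intro exI[of _ "j mod N"]) auto
qed

lemma tour_corner:
  assumes c: "edge M (xs c) \<in> E" and l: "l < nxt M C (xs c)"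
  shows "xs (c + l) = (s ^^ l) (xs c)"
  using xs_add[of l c] t_corner[OF c l] by (simp add: add.commute)

lemma tour_corner_next:
  assumes c: "edge M (xs c) \<in> E"
  shows "xs (c + nxt M C (xs c)) = W (xs c)"
  using xs_add[of "nxt M C (xs c)" c] t_nxt[OF c] by (simp add: add.commute)

lemma tour_corner_bound:
  assumes c: "edge M (xs c) \<in> E" and cN: "c < N"
  shows "c + nxt M C (xs c) \<le> N"
proof (rule ccontr)
  assume "\<not> ?thesis"
  then have l: "N - c < nxt M C (xs c)" using nxt_pos[OF c] by arith
  have "xs N = (s ^^ (N - c)) (xs c)" using tour_corner[OF c l] cN by simp
  moreover have "0 < N - c" using cN by simp
  ultimately have "edge M (xs N) \<notin> E" using nxt_min l by simp
  then show False using xs_N x0E by simp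
qed

lemma ext_in_tour:
  assumes y: "y \<in> walk M C x0" and d: "d \<in> ext_brins M C y"
  shows "\<exists>i<N. s (xs i) = d"
proof -
  obtain c where c: "c < N" "xs c = y" using walk_in_tour y by blast
  obtain k where k: "0 < k" "k < nxt M C y" "d = (s ^^ k) y" using d unfolding ext_brins_def by auto
  have yE: "edge M (xs c) \<in> E" using walk_C x0E y c by simp
  have "xs (c + (k - 1)) = (s ^^ (k - 1)) y" using tour_corner[OF yE, of "k - 1"] k c by simp
  then have "s (xs (c + (k - 1))) = d" using k by (cases k) auto
  then show ?thesis using xs_mod[of "c + (k - 1)"] N_pos by (intro exI[of _ "(c + (k - 1)) mod N"]) auto
qed

lemma tour_exit_is_ext:
  assumes nE: "edge M (s (xs i)) \<notin> E"
  shows "\<exists>y\<in>walk M C x0. s (xs i) \<in> ext_brins M C y"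
proof -
  obtain c where c: "c \<le> i" "edge M (xs c) \<in> E" "i - c < nxt M C (xs c)"
    "xs i = (s ^^ (i - c)) (xs c)" "xs c \<in> walk M C x0" using tour_corner_decomp by blast
  have si: "s (xs i) = (s ^^ Suc (i - c)) (xs c)" using c by simp
  have "Suc (i - c) \<noteq> nxt M C (xs c)"
  proof
    assume h: "Suc (i - c) = nxt M C (xs c)"
    have "edge M ((s ^^ nxt M C (xs c)) (xs c)) \<in> E" using nxt_C c by simp
    then have "edge M (s (xs i)) \<in> E" using si h by simp
    then show False using nE by simp
  qed
  then have "Suc (i - c) < nxt M C (xs c)" using c by simp
  then have "s (xs i) \<in> ext_brins M C (xs c)" unfolding ext_brins_def using si by blast
  then show ?thesis using c by blast
qed

lemma walk_bcorner:
  assumes b: "bcorner M C x0" and y: "y \<in> walk M C x0"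
  shows "bcorner M C y"
  using b walk_sym[OF x0E y] walk_C[OF x0E y] cE_dart unfolding bcorner_def by metis

lemma separating_crossings_even:
  assumes sep: "separating M C e"
  shows "even (card {i. i < N \<and> s (xs i) \<in> e})"
proof -
  obtain d0 where d0: "d0 \<in> e" "(face M d0, face M (a d0)) \<notin> (dual_rel_without e)\<^sup>*"
    using sep unfolding separating_iff_dual_rel_without by blast
  have ch: "chordal M C e" using sep unfolding separating_iff_dual_rel_without by blast
  have d0D: "d0 \<in> D" and e: "e = edge M d0" "e \<notin> E" using chordal_edge ch d0 by auto
  let ?b = "\<lambda>i. (face M d0, face M (xs i)) \<in> (dual_rel_without e)\<^sup>*"
  have "\<And>i. (?b (Suc i) \<noteq> ?b i) = (s (xs i) \<in> e)"
    using tour_side_flip[OF e d0D d0(2) xs_in] by simp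
  then have "{i. i < N \<and> ?b (Suc i) \<noteq> ?b i} = {i. i < N \<and> s (xs i) \<in> e}" by simp
  moreover have "?b N = ?b 0" using xs_N by simp
  ultimately show ?thesis using even_card_flips[of ?b N] by simp
qed


definition sep_pair :: "nat \<Rightarrow> nat \<Rightarrow> bool" where
  "sep_pair i j \<longleftrightarrow> i < N \<and> j < N \<and> i \<noteq> j \<and> s (xs j) = a (s (xs i))
     \<and> separating M C (edge M (s (xs i)))"

lemma s_xs_in: "s (xs i) \<in> D"
  using s_in xs_in .

lemma sep_pair_sym: "sep_pair i j \<Longrightarrow> sep_pair j i"
proof -
  assume "sep_pair i j"
  moreover have "s (xs j) = a (s (xs i)) \<Longrightarrow> s (xs i) = a (s (xs j))"
    using a_a[OF s_xs_in] by simp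
  moreover have "s (xs j) = a (s (xs i)) \<Longrightarrow> edge M (s (xs j)) = edge M (s (xs i))"
    using edge_a[OF s_xs_in] by simp
  ultimately show "sep_pair j i" unfolding sep_pair_def by auto
qed

lemma sep_pair_notin_cE: "sep_pair i j \<Longrightarrow> edge M (s (xs i)) \<notin> E"
  unfolding sep_pair_def separating_def chordal_def by blast

lemma sep_pair_crossings:
  assumes sp: "sep_pair i j" and k: "k < N"
  shows "s (xs k) \<in> edge M (s (xs i)) \<longleftrightarrow> k = i \<or> k = j"
proof -
  have h: "i < N" "j < N" "s (xs j) = a (s (xs i))" using sp unfolding sep_pair_def by auto
  have "s (xs k) \<in> edge M (s (xs i)) \<longleftrightarrow> s (xs k) = s (xs i) \<or> s (xs k) = s (xs j)"
    using h(3) unfolding edge_def by auto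
  also have "\<dots> \<longleftrightarrow> xs k = xs i \<or> xs k = xs j"
    using s_inj[OF xs_in xs_in, of k i] s_inj[OF xs_in xs_in, of k j] by auto
  finally show ?thesis using xs_inj k h by blast
qed

text \<open>Jordan-type property: a separating chord splits the tour into the part strictly between its
  two crossings and the rest, which lie on different sides of it in the complementary dual.\<close>

lemma sep_pair_sides:
  assumes sij: "sep_pair i j" and ij: "i < j"
  obtains P :: "'d set \<Rightarrow> bool"
  where "\<And>k. k \<le> N \<Longrightarrow> P (face M (xs k)) = P (face M x0) \<longleftrightarrow> k \<le> i \<or> j < k"
proof -
  let ?e = "edge M (s (xs i))"
  have sep: "separating M C ?e" using sij unfolding sep_pair_def by blast
  obtain d0 where d0: "d0 \<in> ?e" "(face M d0, face M (a d0)) \<notin> (dual_rel_without ?e)\<^sup>*"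
    using sep unfolding separating_iff_dual_rel_without by blast
  have "chordal M C ?e" using sep unfolding separating_iff_dual_rel_without by blast
  then have d0D: "d0 \<in> D" and e: "?e = edge M d0" "?e \<notin> E" using chordal_edge d0 by auto
  define P :: "'d set \<Rightarrow> bool" where "P X \<longleftrightarrow> (face M d0, X) \<in> (dual_rel_without ?e)\<^sup>*" for X
  have flip: "P (face M (xs (Suc k))) \<noteq> P (face M (xs k)) \<longleftrightarrow> k = i \<or> k = j" if "k < N" for k
    using tour_side_flip[OF e d0D d0(2) xs_in] sep_pair_crossings[OF sij that]
    unfolding P_def by simp
  have "P (face M (xs k)) = P (face M x0) \<longleftrightarrow> k \<le> i \<or> j < k" if "k \<le> N" for k
    using that
  proof (induction k)
    case (Suc k)
    then have kN: "k < N" by simp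
    note ih = Suc.IH[OF less_imp_le[OF kN]] and fl = flip[OF kN]
    show ?case
    proof (cases "k = i \<or> k = j")
      case True
      then have "P (face M (xs (Suc k))) \<noteq> P (face M (xs k))" using fl by simp
      moreover have "Suc k \<le> i \<or> j < Suc k \<longleftrightarrow> \<not> (k \<le> i \<or> j < k)"
        using True ij by auto
      ultimately show ?thesis using ih by auto
    next
      case False
      then have "P (face M (xs (Suc k))) = P (face M (xs k))" using fl by simp
      moreover have "Suc k \<le> i \<or> j < Suc k \<longleftrightarrow> k \<le> i \<or> j < k"
        using False by auto
      ultimately show ?thesis using ih by simp
    qed
  qed simp
  then show ?thesis by (rule that[of P])
qed

lemma sep_pair_nested:
  assumes sij: "sep_pair i j" and ij: "i < j" and suv: "sep_pair u v" and iu: "i < u" and uj: "u < j"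
  shows "i < v \<and> v < j"
proof -
  obtain P :: "'d set \<Rightarrow> bool"
    where side: "\<And>k. k \<le> N \<Longrightarrow> P (face M (xs k)) = P (face M x0) \<longleftrightarrow> k \<le> i \<or> j < k"
    using sep_pair_sides[OF sij ij] by metis
  have uN: "u < N" and vN: "v < N" and sv: "s (xs v) = a (s (xs u))"
    using suv unfolding sep_pair_def by auto
  have "xs (Suc v) = s (xs v)" using t_s sep_pair_notin_cE[OF sep_pair_sym[OF suv]] by simp
  then have "face M (xs (Suc v)) = face M (xs u)" using sv face_as xs_in by simp
  then have "\<not> (Suc v \<le> i \<or> j < Suc v)"
    using side[of u] side[of "Suc v"] uN vN iu uj by simp
  moreover have "v \<noteq> i"
  proof
    assume "v = i"
    have "a (s (xs v)) = s (xs u)" using sv a_a[OF s_xs_in] by simp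
    then have "s (xs u) \<in> edge M (s (xs i))"
      using \<open>v = i\<close> unfolding edge_def by auto
    then show False using sep_pair_crossings[OF sij uN] iu uj by simp
  qed
  ultimately show ?thesis by simp
qed

lemma sep_pair_minimal:
  assumes "sep_pair u v"
  obtains i j where "sep_pair i j" "i < j" "\<And>u v. sep_pair u v \<Longrightarrow> u < v \<Longrightarrow> j - i \<le> v - u"
proof -
  have "\<exists>u v. sep_pair u v \<and> u < v"
    using assms sep_pair_sym unfolding sep_pair_def by (metis linorder_neqE_nat)
  then obtain ij where "sep_pair (fst ij) (snd ij) \<and> fst ij < snd ij"
      "\<forall>uv. sep_pair (fst uv) (snd uv) \<and> fst uv < snd uv \<longrightarrow> snd ij - fst ij \<le> snd uv - fst uv"
    using ex_has_least_nat[of "\<lambda>uv. sep_pair (fst uv) (snd uv) \<and> fst uv < snd uv" _ "\<lambda>uv. snd uv - fst uv"]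
    by (metis fst_conv snd_conv)
  then show ?thesis using that[of "fst ij" "snd ij"] by (metis fst_conv snd_conv)
qed

text \<open>The two crossings of a separating chord are neither in the same corner (no loops) nor in
  consecutive corners (no multiple edges: the chord would be the edge of C closing the first).\<close>

lemma sep_pair_corners:
  assumes sij: "sep_pair i j" and ij: "i < j"
    and c: "edge M (xs c) \<in> E" "c \<le> i" "i < c + nxt M C (xs c)"
  defines "c' \<equiv> c + nxt M C (xs c)"
  shows "c' + nxt M C (xs c') \<le> j"
proof (rule ccontr)
  assume "\<not> c' + nxt M C (xs c') \<le> j"
  then have jc: "j < c' + nxt M C (xs c')" by simp
  have sj: "s (xs j) = a (s (xs i))" and iE: "edge M (s (xs i)) \<notin> E"
    using sij sep_pair_notin_cE unfolding sep_pair_def by auto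
  have cD: "xs c \<in> D" using xs_in .
  have "xs i = (s ^^ (i - c)) (xs c)" using tour_corner[OF c(1), of "i - c"] c by simp
  then have vi: "vertex M (s (xs i)) = vertex M (xs c)" using vertex_ssn[OF cD] by simp
  show False
  proof (cases "j < c'")
    case True
    then have "xs j = (s ^^ (j - c)) (xs c)"
      using tour_corner[OF c(1), of "j - c"] c ij c'_def by simp
    then have "vertex M (s (xs j)) = vertex M (xs c)" using vertex_ssn[OF cD] by simp
    then show False using vi sj vertex_a_neq[OF s_xs_in, of i] by simp
  next
    case False
    have c'W: "xs c' = W (xs c)" using tour_corner_next[OF c(1)] c'_def by simp
    then have c'E: "edge M (xs c') \<in> E" using W_C c(1) by simp
    have "xs j = (s ^^ (j - c')) (xs c')"
      using tour_corner[OF c'E, of "j - c'"] jc False by simp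
    then have "vertex M (s (xs j)) = vertex M (xs c')"
      using vertex_ssn[OF xs_in] by simp
    then have "vertex M (a (s (xs i))) = vertex M (a (sigC M C (xs c)))"
      using sj c'W by simp
    moreover have "vertex M (s (xs i)) = vertex M (sigC M C (xs c))"
      using vi vertex_sigC c(1) by simp
    ultimately have "s (xs i) = sigC M C (xs c)"
      using dart_eq_if_ends_eq[OF s_xs_in sigC_in[OF c(1)]] by simp
    then show False using iE sigC_C c(1) by simp
  qed
qed

end

context subcomplex begin

lemma merge_edge_not_separating:
  assumes m: "merge_edge M C e"
  shows "\<not> separating M C e"
proof
  assume sep: "separating M C e"
  obtain d h d' h' where dh: "d \<in> e" "d' \<in> e" "d \<noteq> d'" "is_ext M C d h" "is_ext M C d' h'"
    "walk M C h \<noteq> walk M C h'" using m unfolding merge_edge_def by blast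
  have ch: "chordal M C e" using m unfolding merge_edge_def by blast
  have dD: "d \<in> D" and e: "e = edge M d" "e \<notin> E" using chordal_edge ch dh by auto
  have d': "d' = a d" using dh e unfolding edge_def by auto
  have hE: "edge M h \<in> E" and h'E: "edge M h' \<in> E"
    using dh unfolding is_ext_def bcorner_def by auto
  interpret O: boundary_tour M g r C h using hE by unfold_locales
  obtain i0 where i0: "i0 < O.N" "s (O.xs i0) = d"
    using O.ext_in_tour in_walk dh unfolding is_ext_def by blast
  have "{i. i < O.N \<and> s (O.xs i) \<in> e} = {i0}"
  proof (rule set_eqI, rule iffI)
    fix i assume i: "i \<in> {i. i < O.N \<and> s (O.xs i) \<in> e}"
    then have iN: "i < O.N" and si: "s (O.xs i) = d \<or> s (O.xs i) = a d"
      using e unfolding edge_def by auto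
    show "i \<in> {i0}"
    proof (cases "s (O.xs i) = d")
      case True
      then have "O.xs i = O.xs i0" using i0 s_inj O.xs_in by metis
      then show ?thesis using O.xs_inj iN i0 by simp
    next
      case False
      then have sa: "s (O.xs i) = d'" using si d' by simp
      then have nE: "edge M (s (O.xs i)) \<notin> E" using e edge_a dD d' by simp
      obtain y where y: "y \<in> walk M C h" "s (O.xs i) \<in> ext_brins M C y"
        using O.tour_exit_is_ext nE by blast
      have yE: "edge M y \<in> E" using walk_C hE y by simp
      have "y = h'" using ext_unique[of d' y h'] y sa dh yE h'E unfolding is_ext_def by simp
      then have "walk M C h' = walk M C h" using walk_sym hE y by simp
      then show ?thesis using dh by simp
    qed
  next
    fix i assume "i \<in> {i0}" then show "i \<in> {i. i < O.N \<and> s (O.xs i) \<in> e}"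
      using i0 dh by simp
  qed
  moreover have "even (card {i. i < O.N \<and> s (O.xs i) \<in> e})"
    using O.separating_crossings_even[OF sep] .
  ultimately show False by simp
qed

lemma dual_rel_sym: "(X, Y) \<in> dual_rel M C \<Longrightarrow> (Y, X) \<in> dual_rel M C"
proof -
  assume "(X, Y) \<in> dual_rel M C"
  then obtain x where x: "x \<in> D" "edge M x \<notin> E" "X = face M x" "Y = face M (a x)"
    unfolding dual_rel_def by blast
  then have "(face M (a x), face M (a (a x))) \<in> dual_rel M C"
    unfolding dual_rel_def using a_in edge_a by fastforce
  then show ?thesis using x by simp
qed

end

lemma rtrancl_avoiding:
  fixes R :: "('a \<times> 'a) set" and F :: "'a set"
  defines "R' \<equiv> {(X, Y). (X, Y) \<in> R \<and> X \<notin> F \<and> Y \<notin> F}"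
  assumes sym: "\<And>X Y. (X, Y) \<in> R \<Longrightarrow> (Y, X) \<in> R"
    and rim: "\<And>b1 b2. b1 \<notin> F \<Longrightarrow> b2 \<notin> F \<Longrightarrow> (\<exists>X\<in>F. (X, b1) \<in> R)
      \<Longrightarrow> (\<exists>X\<in>F. (X, b2) \<in> R) \<Longrightarrow> (b1, b2) \<in> R'\<^sup>*"
    and path: "(X, Y) \<in> R\<^sup>*" and X: "X \<notin> F" and Y: "Y \<notin> F"
  shows "(X, Y) \<in> R'\<^sup>*"
proof -
  have "(Y \<notin> F \<longrightarrow> (X, Y) \<in> R'\<^sup>*)
      \<and> (Y \<in> F \<longrightarrow> (\<exists>b. b \<notin> F \<and> (\<exists>Z\<in>F. (Z, b) \<in> R) \<and> (X, b) \<in> R'\<^sup>*))"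
    using path
  proof (induction rule: rtrancl_induct)
    case (step Y Z)
    show ?case
    proof (cases "Y \<in> F")
      case False
      then have XY: "(X, Y) \<in> R'\<^sup>*" using step by blast
      show ?thesis
      proof (cases "Z \<in> F")
        case True
        then have "\<exists>Z'\<in>F. (Z', Y) \<in> R" using step sym by blast
        then show ?thesis using XY False True by blast
      next
        case False
        then have "(Y, Z) \<in> R'" using step \<open>Y \<notin> F\<close> unfolding R'_def by blast
        then show ?thesis using XY False by (meson rtrancl.rtrancl_into_rtrancl)
      qed
    next
      case True
      then obtain b where b: "b \<notin> F" "\<exists>Z\<in>F. (Z, b) \<in> R" "(X, b) \<in> R'\<^sup>*"
        using step by blast
      show ?thesis
      proof (cases "Z \<in> F")
        case False
        have "\<exists>Z'\<in>F. (Z', Z) \<in> R" using \<open>Y \<in> F\<close> step by blast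
        then have "(b, Z) \<in> R'\<^sup>*" using rim b False by blast
        then show ?thesis using b False by (meson rtrancl_trans)
      qed (use b in blast)
    qed
  qed (use X in simp)
  then show ?thesis using Y by blast
qed


context subcomplex begin

lemma rotation_dual_path:
  assumes x: "x \<in> D" and le: "l1 \<le> l2"
    and H: "\<And>l. l1 \<le> l \<Longrightarrow> l < l2 \<Longrightarrow> edge M (s ((s ^^ l) x)) \<notin> E
          \<and> face M ((s ^^ l) x) \<notin> X \<and> face M (s ((s ^^ l) x)) \<notin> X"
  shows "(face M ((s ^^ l1) x), face M ((s ^^ l2) x)) \<in> {(A, B). (A, B) \<in> dual_rel M C \<and> A \<notin> X \<and> B \<notin> X}\<^sup>*"
  using le H
proof (induction l2 rule: dec_induct)
  case base then show ?case by simp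
next
  case (step l)
  let ?y = "(s ^^ l) x"
  have y: "?y \<in> D" using sn_in x by simp
  have h: "edge M (s ?y) \<notin> E" "face M ?y \<notin> X" "face M (s ?y) \<notin> X"
    using step.prems[of l] step.hyps by auto
  have "(face M (s ?y), face M (a (s ?y))) \<in> dual_rel M C"
    unfolding dual_rel_def using h s_in y by blast
  then have "(face M ?y, face M (s ?y)) \<in> dual_rel M C" using dual_rel_sym face_as y by simp
  then have "(face M ?y, face M ((s ^^ Suc l) x)) \<in> {(A, B). (A, B) \<in> dual_rel M C \<and> A \<notin> X \<and> B \<notin> X}"
    using h by simp
  moreover have "(face M ((s ^^ l1) x), face M ?y) \<in> {(A, B). (A, B) \<in> dual_rel M C \<and> A \<notin> X \<and> B \<notin> X}\<^sup>*"
    using step by simp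
  ultimately show ?case by (meson rtrancl.rtrancl_into_rtrancl)
qed

lemma dual_rel_rtrancl_sym: "(X, Y) \<in> (dual_rel M C)\<^sup>* \<Longrightarrow> (Y, X) \<in> (dual_rel M C)\<^sup>*"
proof (induction rule: rtrancl_induct)
  case base then show ?case by simp
next
  case (step Y Z) then show ?case using dual_rel_sym by (meson converse_rtrancl_into_rtrancl)
qed

end

context rooted_triangulation begin

lemma face_before:
  assumes y: "y \<in> D"
  shows "face M ((s ^^ (period s y - 1)) y) = face M (a y)"
proof -
  have P: "0 < period s y" using S.period_pos y by simp
  have "s ((s ^^ (period s y - 1)) y) = (s ^^ period s y) y"
    using P by (metis Suc_pred' funpow.simps(2) o_apply)
  then have "s ((s ^^ (period s y - 1)) y) = y" using S.period_fix y by simp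
  then have "p ((s ^^ (period s y - 1)) y) = a y" using p_eq by simp
  then show ?thesis using face_p sn_in y by metis
qed


abbreviation "C0 \<equiv> init_cplx M r"

lemma init_cE: "cE C0 = edge M ` face M r"
  unfolding init_cplx_def cE_def Let_def by simp

lemma init_cF: "cF C0 = {face M r}"
  unfolding init_cplx_def cF_def Let_def by simp

lemma init_cV: "cV C0 = {vertex M x |x. x \<in> \<Union> (cE C0)}"
  unfolding init_cplx_def cV_def cE_def Let_def by simp

lemma init_subcomplex: "subcomplex M g r C0"
proof
  show "cE C0 \<subseteq> edges M" unfolding init_cE edges_def using face_sub r_in by auto
  show "cF C0 \<subseteq> faces M" unfolding init_cF faces_def using r_in by auto
  show "\<And>f x. f \<in> cF C0 \<Longrightarrow> x \<in> f \<Longrightarrow> edge M x \<in> cE C0"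
    unfolding init_cF init_cE by auto
qed

lemma init_cE_around:
  assumes y: "y \<in> D" and "face M y \<noteq> face M r" "face M (s y) \<noteq> face M r"
  shows "edge M (s y) \<notin> cE C0"
proof
  assume "edge M (s y) \<in> cE C0"
  then obtain z where z: "z \<in> face M r" "edge M (s y) = edge M z" unfolding init_cE by auto
  have zD: "z \<in> D" using face_sub r_in z by auto
  have "s y = z \<or> s y = a z" using z edge_eqD by blast
  then show False
  proof
    assume "s y = z" then show False using z assms face_sym r_in by metis
  next
    assume "s y = a z"
    then have "z = p y" using p_eq zD by (metis a_a)
    then have "face M y = face M z" using face_p y by simp
    then show False using z assms face_sym r_in by metis
  qed
qed

lemma root_face_once_around:
  assumes x: "x \<in> D" and i: "face M ((s ^^ i) x) = face M r" and j: "face M ((s ^^ j) x) = face M r"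
  shows "i mod period s x = j mod period s x"
proof -
  have "(s ^^ i) x \<in> face M r" "(s ^^ j) x \<in> face M r"
    using i j in_face by metis+
  moreover have "vertex M ((s ^^ i) x) = vertex M ((s ^^ j) x)" using vertex_sn x by simp
  ultimately have "(s ^^ i) x = (s ^^ j) x" using face_one_per_vertex r_in by blast
  then have "(s ^^ (i mod period s x)) x = (s ^^ (j mod period s x)) x"
    using S.funpow_mod_period x by metis
  then show ?thesis using S.period_distinct x S.period_pos by simp
qed

lemma init_dual_path_segment:
  assumes x: "x \<in> D" and le: "l1 \<le> l2"
    and nr: "\<And>l. l1 \<le> l \<Longrightarrow> l \<le> l2 \<Longrightarrow> face M ((s ^^ l) x) \<noteq> face M r"
  shows "(face M ((s ^^ l1) x), face M ((s ^^ l2) x)) \<in> (dual_rel M C0)\<^sup>*"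
proof -
  interpret C: subcomplex M g r C0 using init_subcomplex .
  have "(face M ((s ^^ l1) x), face M ((s ^^ l2) x))
      \<in> {(A, B). (A, B) \<in> dual_rel M C0 \<and> A \<notin> {} \<and> B \<notin> {}}\<^sup>*"
  proof (rule C.rotation_dual_path[OF x le])
    fix l assume "l1 \<le> l" "l < l2"
    then show "edge M (s ((s ^^ l) x)) \<notin> cE C0 \<and> face M ((s ^^ l) x) \<notin> {}
        \<and> face M (s ((s ^^ l) x)) \<notin> {}"
      using nr[of l] nr[of "Suc l"] init_cE_around[of "(s ^^ l) x"] sn_in[OF x, of l] by simp
  qed
  then show ?thesis by simp
qed

text \<open>The root face occurs at most once around a vertex, so between two other faces around
  it one of the two arcs of the rotation avoids it.\<close>

lemma init_dual_path_around_ordered: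
  assumes x: "x \<in> D" and ij: "i \<le> j" "j < period s x"
    and i: "face M ((s ^^ i) x) \<noteq> face M r" and j: "face M ((s ^^ j) x) \<noteq> face M r"
  shows "(face M ((s ^^ i) x), face M ((s ^^ j) x)) \<in> (dual_rel M C0)\<^sup>*"
proof (cases "\<forall>l. i \<le> l \<and> l \<le> j \<longrightarrow> face M ((s ^^ l) x) \<noteq> face M r")
  case True
  then show ?thesis using init_dual_path_segment[OF x ij(1)] by blast
next
  case False
  let ?P = "period s x"
  interpret C: subcomplex M g r C0 using init_subcomplex .
  obtain k where k: "i < k" "k < j" "face M ((s ^^ k) x) = face M r"
    using False i j by (metis le_less)
  have "face M ((s ^^ l) x) \<noteq> face M r" if l: "j \<le> l" "l \<le> i + ?P" for l
  proof
    assume "face M ((s ^^ l) x) = face M r"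
    then have "l mod ?P = k" using root_face_once_around[OF x _ k(3)] k ij by simp
    moreover have "l mod ?P = l \<or> l mod ?P = l - ?P"
      using l ij by (cases "l < ?P") (auto simp: le_mod_geq)
    ultimately show False using l k by auto
  qed
  then have "(face M ((s ^^ j) x), face M ((s ^^ (i + ?P)) x)) \<in> (dual_rel M C0)\<^sup>*"
    using init_dual_path_segment[OF x, of j "i + ?P"] ij by simp
  moreover have "(s ^^ (i + ?P)) x = (s ^^ i) x"
    using S.funpow_mod_period[OF x, of "i + ?P"] S.funpow_mod_period[OF x, of i] by simp
  ultimately show ?thesis using C.dual_rel_rtrancl_sym by simp
qed

lemma init_dual_path_around:
  assumes x: "x \<in> D"
    and i: "face M ((s ^^ i) x) \<noteq> face M r" and j: "face M ((s ^^ j) x) \<noteq> face M r"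
  shows "(face M ((s ^^ i) x), face M ((s ^^ j) x)) \<in> (dual_rel M C0)\<^sup>*"
proof -
  interpret C: subcomplex M g r C0 using init_subcomplex .
  let ?P = "period s x"
  have modeq: "\<And>n. (s ^^ n) x = (s ^^ (n mod ?P)) x" using S.funpow_mod_period x by blast
  have lt: "i mod ?P < ?P" "j mod ?P < ?P" using S.period_pos x by simp_all
  have i': "face M ((s ^^ (i mod ?P)) x) \<noteq> face M r" and j': "face M ((s ^^ (j mod ?P)) x) \<noteq> face M r"
    using i j modeq by metis+
  show ?thesis
  proof (cases "i mod ?P \<le> j mod ?P")
    case True
    then show ?thesis using init_dual_path_around_ordered[OF x True lt(2) i' j'] modeq by metis
  next
    case False
    then show ?thesis
      using init_dual_path_around_ordered[OF x _ lt(1) j' i'] C.dual_rel_rtrancl_sym modeq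
      by (metis nat_le_linear)
  qed
qed

definition linked_to_root :: "'d \<Rightarrow> bool" where
  "linked_to_root y \<longleftrightarrow> (\<forall>l. face M ((s ^^ l) y) \<noteq> face M r
     \<longrightarrow> (face M ((s ^^ l) y), face M (a r)) \<in> (dual_rel M C0)\<^sup>*)"

lemma linked_to_rootI:
  assumes y: "y \<in> D" and l0: "face M ((s ^^ l0) y) \<noteq> face M r"
    "(face M ((s ^^ l0) y), face M (a r)) \<in> (dual_rel M C0)\<^sup>*"
  shows "linked_to_root y"
  unfolding linked_to_root_def using init_dual_path_around[OF y _ l0(1)] l0(2) by (meson rtrancl_trans)

lemma linked_to_root_s: "y \<in> D \<Longrightarrow> linked_to_root y \<Longrightarrow> linked_to_root (s y)"
  unfolding linked_to_root_def by (metis funpow.simps(2) funpow_swap1 o_apply)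

lemma linked_to_root_a:
  assumes y: "y \<in> D" and g: "linked_to_root y"
  shows "linked_to_root (a y)"
proof -
  have ay: "a y \<in> D" using a_in y by simp
  have f1: "face M ((s ^^ (period s (a y) - 1)) (a y)) = face M y"
    using face_before[of "a y"] ay y by simp
  have f2: "face M ((s ^^ (period s y - 1)) y) = face M (a y)" using face_before y by simp
  show ?thesis
  proof (cases "face M y = face M r")
    case False
    then have "(face M ((s ^^ 0) y), face M (a r)) \<in> (dual_rel M C0)\<^sup>*"
      using g unfolding linked_to_root_def by (metis funpow_0)
    then show ?thesis using linked_to_rootI[OF ay, of "period s (a y) - 1"] f1 False by simp
  next
    case True
    then have ay_r: "face M (a y) \<noteq> face M r" using face_a_neq y by metis
    then have "face M ((s ^^ (period s y - 1)) y) \<noteq> face M r" using f2 by simp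
    then have "(face M ((s ^^ (period s y - 1)) y), face M (a r)) \<in> (dual_rel M C0)\<^sup>*"
      using g unfolding linked_to_root_def by blast
    then show ?thesis using linked_to_rootI[OF ay, of 0] f2 ay_r by simp
  qed
qed

lemma linked_to_root_r: "linked_to_root r"
proof -
  have f2: "face M ((s ^^ (period s r - 1)) r) = face M (a r)" using face_before r_in by simp
  have "face M (a r) \<noteq> face M r" using face_a_neq r_in by simp
  then show ?thesis using linked_to_rootI[OF r_in, of "period s r - 1"] f2 by simp
qed

lemma all_linked_to_root:
  assumes y: "y \<in> D"
  shows "linked_to_root y"
proof -
  have MC: "map_connected M" using triangulation unfolding triangulation_def by blast
  then have "(r, y) \<in> ({(d, a d) | d. d \<in> D} \<union> {(d, s d) | d. d \<in> D})\<^sup>*"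
    using r_in y unfolding map_connected_def by blast
  then show ?thesis
  proof (induction rule: rtrancl_induct)
    case base then show ?case using linked_to_root_r by simp
  next
    case (step u v)
    then show ?case using linked_to_root_a linked_to_root_s by blast
  qed
qed

lemma init_dual_connected: "dual_connected M C0"
  unfolding dual_connected_def
proof (intro ballI)
  fix X Y assume X: "X \<in> faces M - cF C0" and Y: "Y \<in> faces M - cF C0"
  interpret C: subcomplex M g r C0 using init_subcomplex .
  have "\<And>Z. Z \<in> faces M - cF C0 \<Longrightarrow> (Z, face M (a r)) \<in> (dual_rel M C0)\<^sup>*"
  proof -
    fix Z assume Z: "Z \<in> faces M - cF C0"
    then obtain z where z: "z \<in> D" "Z = face M z" "Z \<noteq> face M r"
      unfolding faces_def init_cF by auto
    then show "(Z, face M (a r)) \<in> (dual_rel M C0)\<^sup>*"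
      using all_linked_to_root[OF z(1)] unfolding linked_to_root_def
      by (metis funpow_0)
  qed
  then show "(X, Y) \<in> (dual_rel M C0)\<^sup>*"
    using X Y C.dual_rel_rtrancl_sym by (meson rtrancl_trans)
qed

end

context subcomplex begin

definition fan :: "'d \<Rightarrow> 'd set set" where
  "fan h = ext_faces M C h"

definition fan_edges :: "'d \<Rightarrow> 'd set set" where
  "fan_edges h = {edge M d | d f. f \<in> fan h \<and> d \<in> f}"

lemma conquer_cE: "cE (conquer M C h) = E \<union> fan_edges h"
  unfolding conquer_def Let_def cE_def fan_edges_def fan_def by simp

lemma conquer_cF: "cF (conquer M C h) = cF C \<union> fan h"
  unfolding conquer_def Let_def cF_def fan_def by simp

lemma conquer_cV: "cV (conquer M C h) = cV C \<union> {vertex M x | x. x \<in> \<Union> (fan_edges h)}"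
  unfolding conquer_def Let_def cV_def fan_edges_def fan_def by simp

lemma fan_iff: "X \<in> fan h \<longleftrightarrow> (\<exists>k < nxt M C h. X = face M ((s ^^ k) h))"
  unfolding fan_def ext_faces_def by auto

lemma fan_edges_iff:
  assumes hE: "edge M h \<in> E" and x: "x \<in> D"
  shows "edge M x \<in> fan_edges h \<longleftrightarrow> face M x \<in> fan h \<or> face M (a x) \<in> fan h"
proof
  assume "edge M x \<in> fan_edges h"
  then obtain d f where df: "f \<in> fan h" "d \<in> f" "edge M x = edge M d"
    unfolding fan_edges_def by auto
  obtain k where k: "k < nxt M C h" "f = face M ((s ^^ k) h)" using df fan_iff by auto
  have hD: "h \<in> D" using cE_dart hE .
  have fd: "face M d = f" using df k face_sym sn_in hD by blast
  have "x = d \<or> x = a d" using df edge_eqD by blast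
  then show "face M x \<in> fan h \<or> face M (a x) \<in> fan h"
  proof
    assume "x = d" then show ?thesis using fd df by simp
  next
    assume "x = a d"
    then have "a x = d" using x a_a by (metis a_in face_sub df k hD sn_in subsetD)
    then show ?thesis using fd df by simp
  qed
next
  assume "face M x \<in> fan h \<or> face M (a x) \<in> fan h"
  then show "edge M x \<in> fan_edges h"
  proof
    assume "face M x \<in> fan h" then show ?thesis unfolding fan_edges_def using in_face by blast
  next
    assume "face M (a x) \<in> fan h"
    then have "edge M (a x) \<in> fan_edges h" unfolding fan_edges_def using in_face by blast
    then show ?thesis using edge_a x by simp
  qed
qed

lemma dual_rel_conquer:
  assumes hE: "edge M h \<in> E"
  shows "dual_rel M (conquer M C h) = {(A, B). (A, B) \<in> dual_rel M C \<and> A \<notin> fan h \<and> B \<notin> fan h}"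
proof (rule set_eqI, rule iffI)
  fix z assume "z \<in> dual_rel M (conquer M C h)"
  then obtain x where x: "x \<in> D" "edge M x \<notin> cE (conquer M C h)" "z = (face M x, face M (a x))"
    unfolding dual_rel_def by blast
  then have "edge M x \<notin> E" "edge M x \<notin> fan_edges h" using conquer_cE by auto
  then show "z \<in> {(A, B). (A, B) \<in> dual_rel M C \<and> A \<notin> fan h \<and> B \<notin> fan h}"
    using fan_edges_iff[OF hE x(1)] x unfolding dual_rel_def by blast
next
  fix z assume "z \<in> {(A, B). (A, B) \<in> dual_rel M C \<and> A \<notin> fan h \<and> B \<notin> fan h}"
  then obtain x where x: "x \<in> D" "edge M x \<notin> E" "z = (face M x, face M (a x))"
    "face M x \<notin> fan h" "face M (a x) \<notin> fan h" unfolding dual_rel_def by auto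
  then have "edge M x \<notin> cE (conquer M C h)"
    using conquer_cE fan_edges_iff[OF hE x(1)] by auto
  then show "z \<in> dual_rel M (conquer M C h)" unfolding dual_rel_def using x by blast
qed

lemma ext_brin_at_vertex_of_cE:
  assumes x: "x \<in> D" "edge M x \<notin> E" and w: "w \<in> vertex M x" "edge M w \<in> E"
  obtains H where "is_ext M C x H"
proof -
  have wD: "w \<in> D" using cE_dart w(2) .
  have "x \<in> vertex M w" using w vertex_sym x in_vertex by metis
  then obtain m where m: "x = (s ^^ m) w" unfolding vertex_def orb_def by auto
  let ?K = "{j. j \<le> m \<and> edge M ((s ^^ j) w) \<in> E}"
  define j0 where "j0 = Max ?K"
  have K0: "0 \<in> ?K" using w(2) by simp
  have Kf: "finite ?K" by simp
  have j0K: "j0 \<in> ?K" using Max_in[OF Kf] K0 unfolding j0_def by blast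
  have j0max: "\<And>j. j \<in> ?K \<Longrightarrow> j \<le> j0"
    using Max_ge[OF Kf] unfolding j0_def by simp
  have j0m: "j0 < m" using j0K x(2) m by (cases "j0 = m") auto
  let ?H = "(s ^^ j0) w"
  have HE: "edge M ?H \<in> E" using j0K by simp
  have notE: "edge M ((s ^^ l) ?H) \<notin> E" if "0 < l" "l \<le> m - j0" for l
    using j0max[of "l + j0"] that funpow_add_apply[of l j0 s w] by fastforce
  have xH: "x = (s ^^ (m - j0)) ?H" using m j0m funpow_add_apply[of "m - j0" j0 s w] by simp
  have "m - j0 < nxt M C ?H"
    using notE[of "nxt M C ?H"] nxt_C[OF HE] nxt_pos[OF HE] by (meson not_less)
  then have "x \<in> ext_brins M C ?H" unfolding ext_brins_def using xH j0m by auto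
  moreover have "bcorner M C ?H" using bcorner_of HE \<open>m - j0 < nxt M C ?H\<close> j0m by simp
  ultimately show ?thesis using that unfolding is_ext_def by blast
qed

text \<open>Otherwise the exterior edge d would be chordal.\<close>

lemma free_corner_opposite_vertex_fresh:
  assumes fr: "free_corner M r C h" and d: "d \<in> ext_brins M C h"
    and w: "w \<in> vertex M (a d)"
  shows "edge M w \<notin> E"
proof
  assume wE: "edge M w \<in> E"
  have bh: "bcorner M C h" using fr unfolding free_corner_def by blast
  have dD: "d \<in> D" using ext_in bh d unfolding bcorner_def by blast
  have dE: "edge M d \<notin> E" using ext_not_C d .
  obtain H where "is_ext M C (a d) H"
    using ext_brin_at_vertex_of_cE[OF a_in[OF dD] _ w wE] dE edge_a[OF dD] by auto
  moreover have "is_ext M C d h" using bh d unfolding is_ext_def by blast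
  ultimately have "chordal M C (edge M d)" using chordalI[OF dD dE] by blast
  then show False using fr d unfolding free_corner_def by blast
qed

text \<open>The face beyond the k-th face of the fan, across its edge opposite the corner vertex.\<close>

definition fan_outer :: "'d \<Rightarrow> nat \<Rightarrow> 'd set" where
  "fan_outer h k = face M (a (p (p ((s ^^ k) h))))"

definition dual_rel_outside :: "'d \<Rightarrow> ('d set \<times> 'd set) set" where
  "dual_rel_outside h = {(A, B). (A, B) \<in> dual_rel M C \<and> A \<notin> fan h \<and> B \<notin> fan h}"

lemma dual_rel_outside_sym: "(A, B) \<in> dual_rel_outside h \<Longrightarrow> (B, A) \<in> dual_rel_outside h"
  unfolding dual_rel_outside_def using dual_rel_sym by blast

lemma dual_rel_outside_rtrancl_sym: "(A, B) \<in> (dual_rel_outside h)\<^sup>* \<Longrightarrow> (B, A) \<in> (dual_rel_outside h)\<^sup>*"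
proof (induction rule: rtrancl_induct)
  case base then show ?case by simp
next
  case (step Y Z) then show ?case using dual_rel_outside_sym by (meson converse_rtrancl_into_rtrancl)
qed

lemma fan_neighbour_is_outer:
  assumes hE: "edge M h \<in> E" and X: "X \<in> fan h" and R: "(X, b) \<in> dual_rel M C" and b: "b \<notin> fan h"
  shows "\<exists>k < nxt M C h. b = fan_outer h k"
proof -
  have hD: "h \<in> D" using cE_dart hE .
  obtain k where k: "k < nxt M C h" "X = face M ((s ^^ k) h)" using X fan_iff by auto
  obtain x where x: "x \<in> D" "edge M x \<notin> E" "X = face M x" "b = face M (a x)"
    using R unfolding dual_rel_def by blast
  let ?y = "(s ^^ k) h"
  have yD: "?y \<in> D" using sn_in hD by simp
  have "x \<in> face M ?y" using x k face_iff yD by metis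
  then have "x = ?y \<or> x = p ?y \<or> x = p (p ?y)" using face_eq yD by simp
  moreover have "x \<noteq> ?y"
  proof
    assume xy: "x = ?y"
    show False
    proof (cases k)
      case 0 then show False using xy x hE by simp
    next
      case (Suc k')
      have "a ?y = p ((s ^^ k') h)" using Suc p_eq by simp
      then have bb: "b = face M ((s ^^ k') h)" using x xy face_p sn_in hD by simp
      have "k' < nxt M C h" using k Suc by simp
      then have "b \<in> fan h" using fan_iff bb by blast
      then show False using b by simp
    qed
  qed
  moreover have "x \<noteq> p ?y"
  proof
    assume xy: "x = p ?y"
    then have xa: "x = a ((s ^^ Suc k) h)" using p_eq by simp
    have "Suc k \<noteq> nxt M C h" using nxt_C[OF hE] x xa edge_a sn_in hD by (metis)
    then have "Suc k < nxt M C h" using k by simp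
    moreover have "b = face M ((s ^^ Suc k) h)" using x xa a_a[OF sn_in[OF hD, of "Suc k"]] by simp
    ultimately show False using b fan_iff by blast
  qed
  ultimately have "x = p (p ?y)" by blast
  then show ?thesis using x k unfolding fan_outer_def by blast
qed

text \<open>Consecutive faces of the fan at the corner of h share the exterior brin
  (s ^^ Suc k) h. Around its other end z they are the only fan faces, and the faces next to
  them around z are their outer neighbours fan_outer h k and fan_outer h (Suc k).\<close>

lemma fan_faces_around_opposite:
  fixes h :: 'd and k :: nat
  defines "z \<equiv> a ((s ^^ Suc k) h)"
  assumes hE: "edge M h \<in> E" and fl: "face M ((s ^^ l) z) \<in> fan h"
  shows "(s ^^ l) z = z \<or> s ((s ^^ l) z) = z"
proof -
  let ?y1 = "(s ^^ Suc k) h" and ?w = "(s ^^ l) z"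
  have hD: "h \<in> D" using cE_dart hE .
  have y1D: "?y1 \<in> D" using sn_in hD by blast
  then have zD: "z \<in> D" unfolding z_def using a_in by blast
  have wD: "?w \<in> D" using sn_in zD by simp
  have vw: "vertex M ?w = vertex M (a ?y1)" using vertex_sn zD z_def by simp
  obtain j where j: "face M ?w = face M ((s ^^ j) h)" using fl fan_iff by auto
  let ?yj = "(s ^^ j) h"
  have yjD: "?yj \<in> D" using sn_in hD by simp
  have vj: "vertex M ?yj = vertex M ?y1" using vertex_sn hD vertex_ssn by simp
  have "?w \<in> face M ?yj" using j in_face by metis
  then consider "?w = ?yj" | "?w = p ?yj" | "?w = p (p ?yj)" using face_eq yjD by auto
  then show ?thesis
  proof cases
    case 1
    then show ?thesis using vw vj vertex_a_neq[OF y1D] by simp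
  next
    case 2
    then have wa: "?w = a ((s ^^ Suc j) h)" using p_eq by simp
    have "vertex M ((s ^^ Suc j) h) = vertex M ?y1"
      by (simp only: vertex_sn[OF hD])
    moreover have "vertex M (a ((s ^^ Suc j) h)) = vertex M (a ?y1)" using wa vw by simp
    ultimately have "(s ^^ Suc j) h = ?y1"
      using dart_eq_if_ends_eq sn_in[OF hD] y1D by blast
    then show ?thesis using wa z_def by simp
  next
    case 3
    have "a (s ?w) = ?yj" using 3 p_p_p[OF yjD] p_eq by simp
    then have sw: "s ?w = a ?yj" using a_a s_in wD by metis
    have "vertex M (a ?yj) = vertex M (a ?y1)" using sw vw vertex_s[OF wD] by simp
    then have "?yj = ?y1" using dart_eq_if_ends_eq yjD y1D vj by blast
    then show ?thesis using sw z_def by simp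
  qed
qed

lemma fan_outer_around_opposite:
  fixes h :: 'd and k :: nat
  assumes hE: "edge M h \<in> E"
  defines "z \<equiv> a ((s ^^ Suc k) h)"
  shows "2 \<le> period s z" and "p ((s ^^ k) h) = z" and "(s ^^ (period s z - 1)) z = p (p ((s ^^ Suc k) h))"
    and "fan_outer h k = face M (s z)" and "fan_outer h (Suc k) = face M ((s ^^ (period s z - 2)) z)"
proof -
  let ?y1 = "(s ^^ Suc k) h"
  have hD: "h \<in> D" using cE_dart hE .
  have y1D: "?y1 \<in> D" using sn_in hD by blast
  then have zD: "z \<in> D" unfolding z_def using a_in by blast
  have "period s z \<noteq> 1" using S.period_fix[OF zD] s_neq[OF zD] by fastforce
  then show Q2: "2 \<le> period s z" using S.period_pos[OF zD] by linarith
  show pz: "p ((s ^^ k) h) = z" using p_eq z_def by simp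
  have "a (s (p (p ?y1))) = ?y1" using p_p_p[OF y1D] p_eq by simp
  then have "s (p (p ?y1)) = z" using z_def a_a[OF s_in[OF p_in[OF p_in[OF y1D]]]] by metis
  moreover have "s ((s ^^ (period s z - 1)) z) = (s ^^ Suc (period s z - 1)) z"
    by simp
  then have "s ((s ^^ (period s z - 1)) z) = z"
    using S.period_fix[OF zD] Q2 by (simp add: Suc_diff_Suc numeral_2_eq_2)
  ultimately show w1: "(s ^^ (period s z - 1)) z = p (p ?y1)"
    using s_inj[OF sn_in[OF zD] p_in[OF p_in[OF y1D]]] by simp
  show "fan_outer h k = face M (s z)"
    unfolding fan_outer_def using pz p_eq s_in zD by simp
  have "period s z - 1 = Suc (period s z - 2)" using Q2 by simp
  then have "s ((s ^^ (period s z - 2)) z) = (s ^^ (period s z - 1)) z" by simp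
  then have "p ((s ^^ (period s z - 2)) z) = a (p (p ?y1))" using p_eq w1 by simp
  then show "fan_outer h (Suc k) = face M ((s ^^ (period s z - 2)) z)"
    unfolding fan_outer_def using face_p[OF sn_in[OF zD, of "period s z - 2"]] by simp
qed

lemma fan_outer_step:
  assumes fr: "free_corner M r C h" and kn: "Suc k < nxt M C h"
  shows "(fan_outer h k \<in> fan h \<longleftrightarrow> fan_outer h (Suc k) \<in> fan h)
       \<and> (fan_outer h k \<notin> fan h \<longrightarrow> (fan_outer h k, fan_outer h (Suc k)) \<in> (dual_rel_outside h)\<^sup>*)"
proof -
  have hE: "edge M h \<in> E" using fr unfolding free_corner_def bcorner_def by blast
  have hD: "h \<in> D" using cE_dart hE .
  define z where "z = a ((s ^^ Suc k) h)"
  define Q where "Q = period s z"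
  have zD: "z \<in> D" unfolding z_def using a_in sn_in hD by blast
  note around = fan_outer_around_opposite[OF hE, of k, folded z_def Q_def]
  have fresh: "\<And>w. w \<in> vertex M z \<Longrightarrow> edge M w \<notin> E"
    using free_corner_opposite_vertex_fresh[OF fr, of "(s ^^ Suc k) h"] kn z_def
    unfolding ext_brins_def by blast
  have nofan: "face M ((s ^^ l) z) \<notin> fan h" if l: "1 \<le> l" "l \<le> Q - 2" for l
  proof
    assume "face M ((s ^^ l) z) \<in> fan h"
    then have "(s ^^ l) z = z \<or> (s ^^ Suc l) z = z"
      using fan_faces_around_opposite[OF hE, where k=k and l=l, folded z_def] by simp
    moreover have "0 < l" "l < Q" "Suc l < Q" using l around(1) by auto
    ultimately show False using S.period_min[of l z] S.period_min[of "Suc l" z] Q_def by auto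
  qed
  show ?thesis
  proof (cases "Q = 2")
    case True
    have "face M z = face M ((s ^^ k) h)"
      using around(2) face_p[OF sn_in[OF hD]] by metis
    moreover have "face M (p (p ((s ^^ Suc k) h))) = face M ((s ^^ Suc k) h)"
      using face_p p_in sn_in[OF hD] by metis
    ultimately have "face M z \<in> fan h" "face M (p (p ((s ^^ Suc k) h))) \<in> fan h"
      using fan_iff kn Suc_lessD by blast+
    then have "fan_outer h k \<in> fan h" "fan_outer h (Suc k) \<in> fan h"
      using around(3-5) True by simp_all
    then show ?thesis by simp
  next
    case False
    then have Q3: "3 \<le> Q" using around(1) by simp
    have "(face M ((s ^^ 1) z), face M ((s ^^ (Q - 2)) z))
        \<in> {(A, B). (A, B) \<in> dual_rel M C \<and> A \<notin> fan h \<and> B \<notin> fan h}\<^sup>*"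
    proof (rule rotation_dual_path[OF zD])
      show "1 \<le> Q - 2" using Q3 by simp
      fix l assume "1 \<le> l" "l < Q - 2"
      then show "edge M (s ((s ^^ l) z)) \<notin> E \<and> face M ((s ^^ l) z) \<notin> fan h
          \<and> face M (s ((s ^^ l) z)) \<notin> fan h"
        using fresh sn_in_vertex[of "Suc l" z] nofan[of l] nofan[of "Suc l"] by simp
    qed
    then show ?thesis
      using around(4,5) nofan[of 1] nofan[of "Q - 2"] Q3 unfolding dual_rel_outside_def by simp
  qed
qed

lemma fan_outer_chain:
  assumes fr: "free_corner M r C h" and i: "fan_outer h i \<notin> fan h"
  shows "i \<le> j \<Longrightarrow> j < nxt M C h
    \<Longrightarrow> fan_outer h j \<notin> fan h \<and> (fan_outer h i, fan_outer h j) \<in> (dual_rel_outside h)\<^sup>*"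
proof (induction j)
  case 0 then show ?case using i by simp
next
  case (Suc j)
  show ?case
  proof (cases "i \<le> j")
    case True
    then have "fan_outer h j \<notin> fan h" "(fan_outer h i, fan_outer h j) \<in> (dual_rel_outside h)\<^sup>*"
      using Suc by simp_all
    then show ?thesis using fan_outer_step[OF fr, of j] Suc.prems by (meson rtrancl_trans)
  next
    case False
    then have "i = Suc j" using Suc by simp
    then show ?thesis using i by simp
  qed
qed

lemma conquer_dual_connected:
  assumes fr: "free_corner M r C h"
    and DC: "dual_connected M C"
  shows "dual_connected M (conquer M C h)"
  unfolding dual_connected_def
proof (intro ballI)
  fix X Y assume X: "X \<in> faces M - cF (conquer M C h)" and Y: "Y \<in> faces M - cF (conquer M C h)"
  have bh: "bcorner M C h" using fr unfolding free_corner_def by blast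
  have hE: "edge M h \<in> E" using bh unfolding bcorner_def by blast
  have XF: "X \<notin> fan h" "X \<in> faces M - cF C" and YF: "Y \<notin> fan h" "Y \<in> faces M - cF C"
    using X Y conquer_cF by auto
  have path: "(X, Y) \<in> (dual_rel M C)\<^sup>*"
    using DC XF YF unfolding dual_connected_def by blast
  have rim_linked: "(b1, b2) \<in> (dual_rel_outside h)\<^sup>*"
    if b: "b1 \<notin> fan h" "b2 \<notin> fan h"
      "\<exists>X\<in>fan h. (X, b1) \<in> dual_rel M C" "\<exists>X\<in>fan h. (X, b2) \<in> dual_rel M C" for b1 b2
  proof -
    obtain i where i: "i < nxt M C h" "b1 = fan_outer h i"
      using fan_neighbour_is_outer[OF hE] b by blast
    obtain j where j: "j < nxt M C h" "b2 = fan_outer h j"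
      using fan_neighbour_is_outer[OF hE] b by blast
    show ?thesis
    proof (cases "i \<le> j")
      case True then show ?thesis using fan_outer_chain[OF fr _ True j(1)] i j b by simp
    next
      case False
      then have "(b2, b1) \<in> (dual_rel_outside h)\<^sup>*"
        using fan_outer_chain[OF fr, of j i] i j b by simp
      then show ?thesis using dual_rel_outside_rtrancl_sym by blast
    qed
  qed
  have "(X, Y) \<in> (dual_rel_outside h)\<^sup>*"
    using rtrancl_avoiding[of "dual_rel M C" "fan h" X Y] dual_rel_sym rim_linked path XF YF
    unfolding dual_rel_outside_def by blast
  then show "(X, Y) \<in> (dual_rel M (conquer M C h))\<^sup>*"
    using dual_rel_conquer[OF hE] unfolding dual_rel_outside_def by simp
qed

end

context rooted_triangulation begin

text \<open>Connectivity of the complementary dual rules out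
  splitting along a separating edge, and keeping the face beyond the root edge out of C until the
  very end keeps the boundary face through the root edge alive.\<close>

definition alg_inv :: "'d cplx \<Rightarrow> bool" where
  "alg_inv C \<longleftrightarrow> subcomplex M g r C \<and> cV C = {vertex M x | x. x \<in> \<Union> (cE C)}
     \<and> face M r \<in> cF C
     \<and> dual_connected M C
     \<and> (C \<noteq> full_cplx M \<longrightarrow> face M (a r) \<notin> cF C)"

lemma alg_inv_init: "alg_inv (init_cplx M r)"
  unfolding alg_inv_def
  using init_subcomplex init_cV init_cF init_dual_connected face_a_neq r_in by auto

lemma subcomplex_full:
  assumes cp: "subcomplex M g r C" and V: "cV C = {vertex M x | x. x \<in> \<Union> (cE C)}"
    and F: "cF C = faces M"
  shows "C = full_cplx M"
proof -
  interpret subcomplex M g r C using cp .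
  have E: "cE C = edges M"
  proof
    show "cE C \<subseteq> edges M" using cE_sub .
    show "edges M \<subseteq> cE C"
    proof
      fix e assume "e \<in> edges M"
      then obtain y where y: "y \<in> D" "e = edge M y" unfolding edges_def by auto
      have "face M y \<in> cF C" using F y unfolding faces_def by auto
      then show "e \<in> cE C" using cF_edges_in_cE in_face y by blast
    qed
  qed
  have U: "\<Union> (edges M) = D" unfolding edges_def edge_def using a_in by auto
  have "cV C = verts M" using V E U unfolding verts_def by auto
  then show ?thesis unfolding full_cplx_def cV_def cE_def cF_def using E F
    by (metis cE_def cF_def prod.collapse)
qed

lemma a_r_bcorner:
  assumes I: "alg_inv C" and not_full: "C \<noteq> full_cplx M"
  shows "bcorner M C (a r)"
proof -
  interpret subcomplex M g r C using I unfolding alg_inv_def by blast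
  have rF: "face M r \<in> cF C" and ar_notin: "face M (a r) \<notin> cF C"
    using I not_full unfolding alg_inv_def by auto
  have "edge M r \<in> cE C" using cF_edges_in_cE rF in_face by blast
  then have arE: "edge M (a r) \<in> cE C" using edge_a r_in by simp
  have "walk M C (a r) \<notin> cF C" using walk_cF[OF arE] ar_notin by blast
  then show ?thesis unfolding bcorner_def using arE a_in r_in by blast
qed

lemma alg_inv_double_edge:
  assumes I: "alg_inv C" and not_full: "C \<noteq> full_cplx M" and ch: "chordal M C e"
    and ns: "\<not> separating M C e" and ex: "\<And>d. d \<in> e \<Longrightarrow> \<exists>h. is_ext M C d h"
  shows "alg_inv (double_edge M C e)"
proof -
  interpret subcomplex M g r C using I unfolding alg_inv_def by blast
  let ?C' = "double_edge M C e"
  have E': "cE ?C' = insert e (cE C)" and F': "cF ?C' = cF C" and V': "cV ?C' = cV C"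
    unfolding double_edge_def cE_def cF_def cV_def by simp_all
  have eE: "e \<in> edges M" "e \<notin> cE C" using ch unfolding chordal_def by auto
  have cp: "subcomplex M g r ?C'" using cE_sub cF_sub cF_edges_in_cE eE E' F' by unfold_locales auto
  have V: "cV ?C' = {vertex M x | x. x \<in> \<Union> (cE ?C')}"
  proof -
    have "\<And>d. d \<in> e \<Longrightarrow> vertex M d \<in> cV C"
    proof -
      fix d assume d: "d \<in> e"
      obtain h where h: "is_ext M C d h" using ex d by blast
      have hE: "edge M h \<in> cE C" using h unfolding is_ext_def bcorner_def by blast
      have "vertex M d = vertex M h" using ext_vertex hE h unfolding is_ext_def by blast
      then show "vertex M d \<in> cV C" using I hE in_edge unfolding alg_inv_def by blast
    qed
    then show ?thesis using I E' V' unfolding alg_inv_def by auto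
  qed
  have dual_rel_C': "dual_rel M ?C' = dual_rel_without e"
    unfolding dual_rel_def dual_rel_without_def E' by auto
  have nsep: "\<forall>d\<in>e. (face M d, face M (a d)) \<in> (dual_rel_without e)\<^sup>*"
    using ns ch unfolding separating_iff_dual_rel_without by blast
  have sub: "dual_rel M C \<subseteq> (dual_rel_without e)\<^sup>*"
  proof
    fix z assume "z \<in> dual_rel M C"
    then obtain x where x: "x \<in> D" "edge M x \<notin> cE C" "z = (face M x, face M (a x))"
      unfolding dual_rel_def by blast
    show "z \<in> (dual_rel_without e)\<^sup>*"
    proof (cases "edge M x = e")
      case True then show ?thesis using nsep x in_edge by metis
    next
      case False then show ?thesis using x unfolding dual_rel_without_def by blast
    qed
  qed
  have DC: "dual_connected M ?C'"
    unfolding dual_connected_def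
  proof (intro ballI)
    fix X Y assume "X \<in> faces M - cF ?C'" "Y \<in> faces M - cF ?C'"
    then have "(X, Y) \<in> (dual_rel M C)\<^sup>*"
      using I F' unfolding alg_inv_def dual_connected_def by blast
    then have "(X, Y) \<in> ((dual_rel_without e)\<^sup>*)\<^sup>*"
      using rtrancl_mono[OF sub] by blast
    then show "(X, Y) \<in> (dual_rel M ?C')\<^sup>*" using dual_rel_C' by simp
  qed
  have ar_notin: "face M (a r) \<notin> cF ?C'" using I not_full F' unfolding alg_inv_def by auto
  show ?thesis unfolding alg_inv_def using cp V DC ar_notin I F' unfolding alg_inv_def by auto
qed

lemma alg_inv_conquer_basic:
  assumes I: "alg_inv C" and fr: "free_corner M r C h"
  shows "subcomplex M g r (conquer M C h)
    \<and> cV (conquer M C h) = {vertex M x | x. x \<in> \<Union> (cE (conquer M C h))}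
    \<and> face M r \<in> cF (conquer M C h)
    \<and> dual_connected M (conquer M C h)"
proof -
  interpret subcomplex M g r C using I unfolding alg_inv_def by blast
  have bh: "bcorner M C h" using fr unfolding free_corner_def by blast
  have hE: "edge M h \<in> cE C" using bh unfolding bcorner_def by blast
  have hD: "h \<in> D" using cE_dart hE .
  let ?C' = "conquer M C h"
  have FanF: "fan h \<subseteq> faces M"
    unfolding fan_def ext_faces_def faces_def using sn_in hD by auto
  have EnE: "fan_edges h \<subseteq> edges M"
  proof
    fix e assume "e \<in> fan_edges h"
    then obtain d f where df: "e = edge M d" "f \<in> fan h" "d \<in> f"
      unfolding fan_edges_def by auto
    obtain k where "f = face M ((s ^^ k) h)" using df fan_iff by auto
    then have "d \<in> D" using df face_sub sn_in hD by blast
    then show "e \<in> edges M" using df unfolding edges_def by blast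
  qed
  have cp: "subcomplex M g r ?C'"
  proof
    show "cE ?C' \<subseteq> edges M" using cE_sub EnE conquer_cE by auto
    show "cF ?C' \<subseteq> faces M" using cF_sub FanF conquer_cF by auto
    fix f x assume "f \<in> cF ?C'" "x \<in> f"
    then show "edge M x \<in> cE ?C'"
      using cF_edges_in_cE conquer_cF conquer_cE unfolding fan_edges_def by auto
  qed
  have V: "cV ?C' = {vertex M x | x. x \<in> \<Union> (cE ?C')}"
    using I conquer_cV conquer_cE unfolding alg_inv_def by auto
  have rF: "face M r \<in> cF ?C'" using I conquer_cF unfolding alg_inv_def by auto
  have DC: "dual_connected M C" using I unfolding alg_inv_def by blast
  show ?thesis using cp V rF conquer_dual_connected[OF fr DC] by blast
qed

text \<open>The brin p (a r) reverses the first exterior brin of the corner at a r, so as an exterior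
  brin of a free corner it would be chordal.\<close>

lemma free_corner_ext_p_a_r:
  assumes I: "alg_inv C" and not_full: "C \<noteq> full_cplx M" and fr: "free_corner M r C h"
    and ext: "p (a r) \<in> ext_brins M C h"
  shows False
proof -
  interpret subcomplex M g r C using I unfolding alg_inv_def by blast
  have bh: "bcorner M C h" using fr unfolding free_corner_def by blast
  have ar_bcorner: "bcorner M C (a r)" using a_r_bcorner I not_full .
  have arE: "edge M (a r) \<in> cE C" using ar_bcorner unfolding bcorner_def by blast
  have sarD: "s (a r) \<in> D" using s_in a_in r_in .
  have yD: "p (a r) \<in> D" using p_in a_in r_in .
  have yb: "p (a r) = a (s (a r))" using p_eq by simp
  have yE: "edge M (p (a r)) \<notin> cE C" using ext_not_C ext by blast
  then have sarE: "edge M (s (a r)) \<notin> cE C" using yb edge_a sarD by simp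
  have "1 < nxt M C (a r)"
  proof (rule ccontr)
    assume "\<not> 1 < nxt M C (a r)"
    then have "nxt M C (a r) = 1" using nxt_pos[OF arE] by simp
    then show False using nxt_C[OF arE] sarE by simp
  qed
  then have "s (a r) \<in> ext_brins M C (a r)"
    unfolding ext_brins_def by (auto intro!: exI[of _ 1])
  then have "is_ext M C (a (p (a r))) (a r)" using yb a_a sarD ar_bcorner unfolding is_ext_def by simp
  moreover have "is_ext M C (p (a r)) h" using ext bh unfolding is_ext_def by simp
  ultimately have "chordal M C (edge M (p (a r)))" using chordalI[OF yD yE] by blast
  then show False using fr ext unfolding free_corner_def by blast
qed

lemma free_corner_fan_a_r:
  assumes I: "alg_inv C" and not_full: "C \<noteq> full_cplx M" and fr: "free_corner M r C h"
    and fan: "face M (a r) \<in> ext_faces M C h"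
  shows "h = p (a r)"
proof -
  interpret subcomplex M g r C using I unfolding alg_inv_def by blast
  have bh: "bcorner M C h" using fr unfolding free_corner_def by blast
  have hE: "edge M h \<in> cE C" using bh unfolding bcorner_def by blast
  have hD: "h \<in> D" using cE_dart hE .
  have ar_bcorner: "bcorner M C (a r)" using a_r_bcorner I not_full .
  have arE: "edge M (a r) \<in> cE C" using ar_bcorner unfolding bcorner_def by blast
  have arD: "a r \<in> D" using a_in r_in .
  have rE: "edge M r \<in> cE C" using arE edge_a r_in by simp
  obtain k where k: "k < nxt M C h" "face M (a r) = face M ((s ^^ k) h)"
    using fan fan_iff unfolding fan_def by auto
  let ?y = "(s ^^ k) h"
  have yD: "?y \<in> D" using sn_in hD .
  have "?y \<in> face M (a r)" using k in_face by metis
  then consider "?y = a r" | "?y = p (p (a r))" | "?y = p (a r)"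
    using face_eq arD by auto
  then show ?thesis
  proof cases
    case 1
    then show ?thesis
      using fr nxt_min[of k h] k arE unfolding free_corner_def edge_def by (cases k) auto
  next
    case 2
    then have "a (s ?y) = a r" using p_p_p[OF arD] p_eq by simp
    then have sy: "(s ^^ Suc k) h = r" using a_inj[OF s_in[OF yD] r_in] by simp
    then have "Suc k = nxt M C h"
      using nxt_min[of "Suc k" h] rE k by (metis Suc_leI le_neq_implies_less zero_less_Suc)
    then have "sigC M C h = r" unfolding sigC_def using sy by simp
    then show ?thesis using fr in_edge unfolding free_corner_def by metis
  next
    case 3
    show ?thesis
    proof (cases k)
      case (Suc k')
      then have "p (a r) \<in> ext_brins M C h"
        unfolding ext_brins_def using k 3 by (intro CollectI exI[of _ k]) simp
      then show ?thesis using free_corner_ext_p_a_r I not_full fr by blast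
    qed (use 3 in simp)
  qed
qed

text \<open>The brin p (p (a r)) enters the corner at a r, so in the tour of the boundary face through
  a r it is the last brin before a r; if it is not in C it is an exterior brin of a boundary
  corner of that face.\<close>

lemma free_corner_at_p_a_r:
  assumes I: "alg_inv C" and not_full: "C \<noteq> full_cplx M" and fr: "free_corner M r C h"
    and h: "h = p (a r)"
  shows "nxt M C h = 1"
proof (rule ccontr)
  assume "nxt M C h \<noteq> 1"
  interpret subcomplex M g r C using I unfolding alg_inv_def by blast
  have bh: "bcorner M C h" using fr unfolding free_corner_def by blast
  have hE: "edge M h \<in> cE C" using bh unfolding bcorner_def by blast
  have hD: "h \<in> D" using cE_dart hE .
  have ar_bcorner: "bcorner M C (a r)" using a_r_bcorner I not_full .
  have arE: "edge M (a r) \<in> cE C" using ar_bcorner unfolding bcorner_def by blast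
  have arD: "a r \<in> D" using a_in r_in .
  interpret O: boundary_tour M g r C "a r" using arE by unfold_locales
  let ?c = "p (p (a r))"
  have cD: "?c \<in> D" using p_in arD by blast
  have shc: "s h = a ?c"
    using h p_eq a_a[OF s_in[OF hD]] by metis
  have "1 < nxt M C h" using nxt_pos[OF hE] \<open>nxt M C h \<noteq> 1\<close> by simp
  then have shext: "s h \<in> ext_brins M C h" unfolding ext_brins_def by (auto intro!: exI[of _ 1])
  then have shE: "edge M (s h) \<notin> cE C" using ext_not_C by blast
  then have cE': "edge M ?c \<notin> cE C" using shc edge_a cD by simp
  have "a (s ?c) = a r" using p_p_p[OF arD] p_eq by simp
  then have "s ?c = r" using a_inj[OF s_in[OF cD] r_in] by blast
  then have "edge M (s ?c) \<in> cE C" using arE edge_a r_in by simp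
  then have "t ?c = O.xs (Suc (O.N - 1))"
    using t_p p_p_p[OF arD] O.xs_N O.N_pos by simp
  then have cpos: "?c = O.xs (O.N - 1)" using t_inj[OF cD O.xs_in] by simp
  obtain c0 where c0: "edge M (O.xs c0) \<in> cE C" "O.N - 1 - c0 < nxt M C (O.xs c0)"
      "O.xs (O.N - 1) = (s ^^ (O.N - 1 - c0)) (O.xs c0)" "O.xs c0 \<in> walk M C (a r)"
    using O.tour_corner_decomp by blast
  have "O.N - 1 - c0 \<noteq> 0" using c0 cE' cpos by auto
  then have "?c \<in> ext_brins M C (O.xs c0)" unfolding ext_brins_def using c0 cpos by auto
  moreover have "bcorner M C (O.xs c0)" using O.walk_bcorner ar_bcorner c0 by blast
  ultimately have "is_ext M C (a (s h)) (O.xs c0)" using shc a_a cD unfolding is_ext_def by simp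
  moreover have "is_ext M C (s h) h" using shext bh unfolding is_ext_def by simp
  ultimately have "chordal M C (edge M (s h))"
    using chordalI[OF s_in[OF hD] shE] by blast
  then show False using fr shext unfolding free_corner_def by blast
qed

text \<open>Then the fan is the single face across the root edge, all of whose edges lie in C;
  it is isolated in the connected complementary dual, so it is the last face missing.\<close>

lemma conquer_p_a_r_full:
  assumes I: "alg_inv C" and not_full: "C \<noteq> full_cplx M" and fr: "free_corner M r C h"
    and h: "h = p (a r)" and n1: "nxt M C h = 1"
  shows "conquer M C h = full_cplx M"
proof -
  interpret subcomplex M g r C using I unfolding alg_inv_def by blast
  have hE: "edge M h \<in> cE C" using fr unfolding free_corner_def bcorner_def by blast
  have hD: "h \<in> D" using cE_dart hE .
  have arE: "edge M (a r) \<in> cE C"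
    using a_r_bcorner[OF I not_full] unfolding bcorner_def by blast
  have arD: "a r \<in> D" using a_in r_in .
  let ?c = "p (p (a r))"
  have cD: "?c \<in> D" using p_in arD by blast
  have fan_h: "fan h = {face M (a r)}"
    unfolding fan_def ext_faces_def using n1 h face_p[OF arD] by simp
  have "edge M (s h) \<in> cE C" using nxt_C[OF hE] n1 by simp
  moreover have "edge M ?c = edge M (s h)"
    using h p_eq a_a[OF s_in[OF hD]] edge_a cD by metis
  ultimately have edges_in: "edge M x \<in> cE C" if "x \<in> face M (a r)" for x
    using that face_eq arD h arE hE by auto
  have isolated: "X = face M (a r)" if "(face M (a r), X) \<in> (dual_rel M C)\<^sup>*" for X
    using that
  proof (induction rule: rtrancl_induct)
    case (step Y Z)
    then obtain x where "x \<in> D" "edge M x \<notin> cE C" "Y = face M x"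
      unfolding dual_rel_def by blast
    then show ?case using edges_in step in_face by metis
  qed simp
  have conq: "subcomplex M g r (conquer M C h)"
    "cV (conquer M C h) = {vertex M x | x. x \<in> \<Union> (cE (conquer M C h))}"
    using alg_inv_conquer_basic[OF I fr] by blast+
  have conn: "dual_connected M C"
    and "face M (a r) \<notin> cF C"
    using I not_full unfolding alg_inv_def by blast+
  then have ar: "face M (a r) \<in> faces M - cF C"
    using arD unfolding faces_def by blast
  have "X \<in> cF (conquer M C h)" if X: "X \<in> faces M" for X
  proof (cases "X \<in> cF C")
    case False
    then have "X = face M (a r)" using conn ar X isolated unfolding dual_connected_def by blast
    then show ?thesis using fan_h conquer_cF by simp
  qed (simp add: conquer_cF)
  then have "faces M \<subseteq> cF (conquer M C h)" by blast
  then have "cF (conquer M C h) = faces M" using subcomplex.cF_sub[OF conq(1)] by blast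
  then show ?thesis using subcomplex_full conq by blast
qed

lemma alg_inv_conquer_a_r:
  assumes I: "alg_inv C" and not_full: "C \<noteq> full_cplx M" and fr: "free_corner M r C h"
    and not_full': "conquer M C h \<noteq> full_cplx M"
  shows "face M (a r) \<notin> cF (conquer M C h)"
proof
  interpret subcomplex M g r C using I unfolding alg_inv_def by blast
  assume "face M (a r) \<in> cF (conquer M C h)"
  then have "face M (a r) \<in> ext_faces M C h"
    using I not_full conquer_cF unfolding alg_inv_def fan_def by auto
  then have "h = p (a r)" using free_corner_fan_a_r I not_full fr by blast
  then show False
    using free_corner_at_p_a_r conquer_p_a_r_full I not_full fr not_full' by blast
qed

lemma alg_inv_step:
  assumes I: "alg_inv C" and st: "alg_step M r C C'"
  shows "alg_inv C'"
proof -
  interpret subcomplex M g r C using I unfolding alg_inv_def by blast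
  have not_full: "C \<noteq> full_cplx M" using st unfolding alg_step_def by blast
  consider (c) h where "free_corner M r C h" "C' = conquer M C h"
    | (sp) e where "split_edge M C e" "C' = double_edge M C e"
    | (me) e where "merge_edge M C e" "C' = double_edge M C e"
    using st unfolding alg_step_def by blast
  then show ?thesis
  proof cases
    case c
    then show ?thesis
      using alg_inv_conquer_basic[OF I c(1)] alg_inv_conquer_a_r[OF I not_full c(1)]
      unfolding alg_inv_def by blast
  next
    case sp
    have "chordal M C e" "\<not> separating M C e" using sp unfolding split_edge_def by auto
    moreover have "\<And>d. d \<in> e \<Longrightarrow> \<exists>h. is_ext M C d h"
      using sp unfolding split_edge_def chordal_def by blast
    ultimately show ?thesis using alg_inv_double_edge[OF I not_full] sp by simp
  next
    case me
    have "chordal M C e" using me unfolding merge_edge_def by auto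
    moreover have "\<not> separating M C e" using merge_edge_not_separating me by blast
    moreover have "\<And>d. d \<in> e \<Longrightarrow> \<exists>h. is_ext M C d h"
      using me unfolding merge_edge_def chordal_def by blast
    ultimately show ?thesis using alg_inv_double_edge[OF I not_full] me by simp
  qed
qed

lemma alg_inv_reachable: "(alg_step M r)\<^sup>*\<^sup>* (init_cplx M r) C \<Longrightarrow> alg_inv C"
proof (induction rule: rtranclp_induct)
  case base then show ?case using alg_inv_init .
next
  case (step y z) then show ?case using alg_inv_step by blast
qed

definition progress :: "'d cplx \<Rightarrow> nat" where
  "progress C = card (cE C) + card (cF C)"

lemma finite_edges: "finite (edges M)"
  unfolding edges_def using finite_D by simp

lemma finite_faces: "finite (faces M)"
  unfolding faces_def using finite_D by simp

lemma progress_bound: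
  assumes I: "alg_inv C"
  shows "progress C \<le> card (edges M) + card (faces M)"
proof -
  interpret subcomplex M g r C using I unfolding alg_inv_def by blast
  have "card (cE C) \<le> card (edges M)" using card_mono[OF finite_edges cE_sub] .
  moreover have "card (cF C) \<le> card (faces M)" using card_mono[OF finite_faces cF_sub] .
  ultimately show ?thesis unfolding progress_def by simp
qed

lemma progress_step:
  assumes I: "alg_inv C" and st: "alg_step M r C C'"
  shows "progress C < progress C'"
proof -
  interpret subcomplex M g r C using I unfolding alg_inv_def by blast
  have I': "alg_inv C'" using alg_inv_step I st .
  have fE': "finite (cE C')" and fF': "finite (cF C')"
    using I' subcomplex.cE_sub subcomplex.cF_sub finite_edges finite_faces finite_subset
    unfolding alg_inv_def by metis+
  consider (c) h where "free_corner M r C h" "C' = conquer M C h"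
    | (d) e where "chordal M C e" "C' = double_edge M C e"
    using st unfolding alg_step_def split_edge_def merge_edge_def by blast
  then show ?thesis
  proof cases
    case c
    have bh: "bcorner M C h" using c unfolding free_corner_def by blast
    have hE: "edge M h \<in> cE C" using bh unfolding bcorner_def by blast
    have hD: "h \<in> D" using cE_dart hE .
    have "face M h \<notin> cF C"
    proof
      assume "face M h \<in> cF C"
      then have "walk M C h \<in> cF C" using face_cF_walk hD by simp
      then show False using bh unfolding bcorner_def by blast
    qed
    moreover have "face M h \<in> fan h" using fan_iff nxt_pos[OF hE] by (metis funpow_0)
    ultimately have "cF C \<subset> cF C'" using c conquer_cF by auto
    then have "card (cF C) < card (cF C')" using psubset_card_mono fF' by blast
    moreover have "card (cE C) \<le> card (cE C')"
      using card_mono fE' c conquer_cE by (metis Un_upper1)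
    ultimately show ?thesis unfolding progress_def by simp
  next
    case d
    have "cE C \<subset> cE C'" using d unfolding chordal_def double_edge_def cE_def by auto
    then have "card (cE C) < card (cE C')" using psubset_card_mono fE' by blast
    moreover have "cF C' = cF C" using d unfolding double_edge_def cF_def by simp
    ultimately show ?thesis unfolding progress_def by simp
  qed
qed

lemma alg_termination: "\<not> (\<exists>f. f 0 = init_cplx M r \<and> (\<forall>n. alg_step M r (f n) (f (Suc n))))"
proof
  assume "\<exists>f. f 0 = init_cplx M r \<and> (\<forall>n. alg_step M r (f n) (f (Suc n)))"
  then obtain f where f0: "f 0 = init_cplx M r" and fs: "\<And>n. alg_step M r (f n) (f (Suc n))"
    by blast
  have I: "alg_inv (f n)" for n
    by (induction n) (use f0 alg_inv_init alg_inv_step fs in auto)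
  have "n \<le> progress (f n)" for n
  proof (induction n)
    case (Suc n)
    then show ?case using progress_step[OF I fs, of n] by simp
  qed simp
  then show False
    using progress_bound[OF I] by (meson not_less_eq_eq)
qed

lemma r_not_bcorner:
  assumes I: "alg_inv C"
  shows "\<not> bcorner M C r"
proof -
  interpret subcomplex M g r C using I unfolding alg_inv_def by blast
  have "face M r \<in> cF C" using I unfolding alg_inv_def by blast
  then have "walk M C r = face M r" using face_cF_walk r_in by simp
  then show ?thesis using \<open>face M r \<in> cF C\<close> unfolding bcorner_def by simp
qed

end

locale no_root_candidate = rooted_triangulation M g r for M :: "'d cmap" and g r +
  fixes C :: "'d cplx"
  assumes inv: "alg_inv C" and not_full: "C \<noteq> full_cplx M"
    and no_candidate: "\<not> root_candidate M r C"
begin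

sublocale subcomplex M g r C
  using inv unfolding alg_inv_def by blast

lemma a_r_bcorner': "bcorner M C (a r)"
  using a_r_bcorner[OF inv not_full] .

sublocale O: boundary_tour M g r C "a r"
  using a_r_bcorner' unfolding bcorner_def by unfold_locales blast

lemma tour_bcorner: "edge M (O.xs k) \<in> E \<Longrightarrow> bcorner M C (O.xs k)"
  using O.tour_cE_in_walk O.walk_bcorner a_r_bcorner' by blast

lemma r_notin_tour_cE: "edge M (O.xs k) \<in> E \<Longrightarrow> O.xs k \<noteq> r"
  using tour_bcorner r_not_bcorner[OF inv] by metis

lemma chordal_at_root_face:
  assumes ext: "is_ext M C d y" and wy: "walk M C y = walk M C (a r)"
    and ch: "chordal M C (edge M d)"
  obtains h where "is_ext M C (a d) h" "walk M C h = walk M C (a r)"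
    and "separating M C (edge M d)"
proof -
  have dD: "d \<in> D" using chordal_edge[OF ch in_edge] by simp
  have ne: "d \<noteq> a d" and ad: "a d \<in> edge M d"
    using a_neq[OF dD] unfolding edge_def by auto
  obtain h where h: "is_ext M C (a d) h" using ch unfolding chordal_def edge_def by auto
  have not_sm: "\<not> split_edge M C (edge M d)" "\<not> merge_edge M C (edge M d)"
    using no_candidate ext wy in_edge a_r_bcorner' unfolding root_candidate_def edge_def by blast+
  have wh: "walk M C h = walk M C (a r)"
  proof (rule ccontr)
    assume "walk M C h \<noteq> walk M C (a r)"
    then have "merge_edge M C (edge M d)"
      unfolding merge_edge_def using ch ext h ne in_edge[of d] ad wy by metis
    then show False using not_sm by blast
  qed
  then have "separating M C (edge M d)"
    using not_sm ch ext h ne in_edge[of d] ad wy unfolding split_edge_def by metis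
  then show ?thesis using that h wh by blast
qed

text \<open>Every corner of the root boundary face away from the root edge is not free, so it has a
  chordal exterior edge, which by the previous lemma is separating and crosses the tour twice.\<close>

lemma corner_sep_pair:
  assumes c: "0 < c" "c < O.N" "edge M (O.xs c) \<in> E" and sr: "sigC M C (O.xs c) \<noteq> r"
  shows "\<exists>u v. c \<le> u \<and> Suc u < c + nxt M C (O.xs c) \<and> O.sep_pair u v"
proof -
  let ?y = "O.xs c"
  have y: "?y \<in> walk M C (a r)" using O.tour_cE_in_walk c by simp
  have wy: "walk M C ?y = walk M C (a r)" using walk_sym[OF O.x0E y] .
  have "?y \<noteq> a r" using O.xs_inj[of c 0] c O.N_pos by auto
  moreover have "sigC M C ?y \<noteq> a r"
  proof
    assume "sigC M C ?y = a r"
    then have "O.xs (c + nxt M C ?y) = r" using O.tour_corner_next[OF c(3)] a_a[OF r_in] by simp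
    moreover have "edge M (O.xs (c + nxt M C ?y)) \<in> E"
      using O.tour_corner_next[OF c(3)] W_C[OF c(3)] by simp
    ultimately show False using r_notin_tour_cE by blast
  qed
  ultimately have "?y \<notin> edge M r" "sigC M C ?y \<notin> edge M r"
    using r_notin_tour_cE[OF c(3)] sr unfolding edge_def by auto
  moreover have "\<not> free_corner M r C ?y"
    using no_candidate a_r_bcorner' wy unfolding root_candidate_def edge_def by blast
  ultimately obtain d where d: "d \<in> ext_brins M C ?y" "chordal M C (edge M d)"
    using O.walk_bcorner[OF a_r_bcorner' y] unfolding free_corner_def by blast
  obtain l where l: "0 < l" "l < nxt M C ?y" "d = (s ^^ l) ?y"
    using d unfolding ext_brins_def by auto
  let ?u = "c + (l - 1)"
  have "O.xs ?u = (s ^^ (l - 1)) ?y" using O.tour_corner[OF c(3), of "l - 1"] l by simp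
  then have su: "s (O.xs ?u) = d" using l by (cases l) auto
  have uN: "?u < O.N" using O.tour_corner_bound[OF c(3) c(2)] l by simp
  have ext: "is_ext M C d ?y" using d O.walk_bcorner[OF a_r_bcorner' y] unfolding is_ext_def by simp
  obtain h where h: "is_ext M C (a d) h" "walk M C h = walk M C (a r)"
    and sep: "separating M C (edge M d)"
    using chordal_at_root_face[OF ext wy d(2)] by blast
  have "h \<in> walk M C (a r)" using h(2) in_walk by metis
  then obtain v where v: "v < O.N" "s (O.xs v) = a d"
    using O.ext_in_tour h(1) unfolding is_ext_def by blast
  have "?u \<noteq> v" using su v a_neq O.s_xs_in by metis
  then have "O.sep_pair ?u v" unfolding O.sep_pair_def using uN v su sep by simp
  moreover have "Suc ?u < c + nxt M C ?y" using l by simp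
  ultimately show ?thesis by (intro exI[of _ ?u] exI[of _ v]) simp
qed

text \<open>If the second corner of the tour ended at r, the rotation at a r would meet no other
  edge of C; but the edge of the root face at that vertex is in C.\<close>

lemma second_corner_sigC_ne_r: "sigC M C (O.xs (nxt M C (a r))) \<noteq> r"
proof
  let ?n0 = "nxt M C (a r)" and ?y = "O.xs (nxt M C (a r))"
  assume sr: "sigC M C ?y = r"
  have arE: "edge M (a r) \<in> E" using O.x0E .
  have arD: "a r \<in> D" using a_in r_in .
  have xc1: "?y = W (a r)" using O.tour_corner_next[of 0] arE by simp
  have y1E: "edge M ?y \<in> E" using xc1 W_C arE by simp
  let ?d = "sigC M C (a r)"
  have "vertex M (a ?d) = vertex M (a (a r))"
    using vertex_sigC[OF y1E] sr xc1 a_a r_in by simp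
  moreover have "vertex M ?d = vertex M (a r)" using vertex_sigC arE by simp
  ultimately have "?d = a r" using dart_eq_if_ends_eq[OF sigC_in[OF arE] arD] by simp
  then have fix0: "(s ^^ ?n0) (a r) = a r" unfolding sigC_def by simp
  let ?q = "p (p r)"
  have "face M r \<in> cF C" using inv unfolding alg_inv_def by blast
  then have qE: "edge M ?q \<in> E" using cF_edges_in_cE face_eq[OF r_in] by simp
  have "vertex M ?q = vertex M (a r)" using vertex_pp r_in by simp
  then have "?q \<in> vertex M (a r)" using in_vertex by metis
  then obtain m where m: "?q = (s ^^ m) (a r)" unfolding vertex_def orb_def by auto
  then have qm: "?q = (s ^^ (m mod ?n0)) (a r)" using funpow_mod_eq[OF fix0] by simp
  have "?q \<noteq> a r"
  proof
    assume "?q = a r"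
    then have "a r \<in> face M r" using face_eq r_in by simp
    then show False using a_notin_face r_in by simp
  qed
  then have "m mod ?n0 \<noteq> 0" using qm by (metis funpow_0)
  moreover have "m mod ?n0 < ?n0" using nxt_pos[OF arE] by simp
  ultimately have "edge M ?q \<notin> E" using nxt_min[of "m mod ?n0" "a r"] qm by simp
  then show False using qE by simp
qed

lemma sep_pair_exists: "\<exists>u v. O.sep_pair u v"
proof -
  let ?n0 = "nxt M C (a r)"
  have arE: "edge M (a r) \<in> E" using O.x0E .
  have y1E: "edge M (O.xs ?n0) \<in> E"
    using O.tour_corner_next[of 0] arE W_C by simp
  have "?n0 < O.N"
  proof (rule ccontr)
    assume "\<not> ?n0 < O.N"
    then have "?n0 = O.N" using O.tour_corner_bound[of 0] arE O.N_pos by simp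
    then have "a (sigC M C (a r)) = a r" using O.tour_corner_next[of 0] arE O.xs_N by simp
    then have "sigC M C (a r) = r" using a_inj[OF sigC_in[OF arE] r_in] by simp
    then have "vertex M r = vertex M (a r)" using vertex_sigC arE by metis
    then show False using vertex_a_neq[OF r_in] by simp
  qed
  then show ?thesis
    using corner_sep_pair[OF nxt_pos[OF arE] _ y1E second_corner_sigC_ne_r] by blast
qed

text \<open>A separating pair with minimal gap is impossible: the corner after the one containing its
  first crossing lies strictly inside it and yields a nested pair with a smaller gap.\<close>

lemma absurd: False
proof -
  obtain u0 v0 where "O.sep_pair u0 v0" using sep_pair_exists by blast
  then obtain i j where sij: "O.sep_pair i j" and ij: "i < j"
    and minimal: "\<And>u v. O.sep_pair u v \<Longrightarrow> u < v \<Longrightarrow> j - i \<le> v - u"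
    by (rule O.sep_pair_minimal) blast
  obtain c where c: "c \<le> i" "edge M (O.xs c) \<in> E" "i - c < nxt M C (O.xs c)"
    using O.tour_corner_decomp by blast
  define c' where "c' = c + nxt M C (O.xs c)"
  have c'E: "edge M (O.xs c') \<in> E" using O.tour_corner_next[OF c(2)] W_C[OF c(2)] c'_def by simp
  have jN: "j < O.N" using sij unfolding O.sep_pair_def by simp
  have c''j: "c' + nxt M C (O.xs c') \<le> j"
    using O.sep_pair_corners[OF sij ij c(2,1)] c c'_def by simp
  have ic': "i < c'" using c c'_def by simp
  have "sigC M C (O.xs c') \<noteq> r"
  proof
    assume "sigC M C (O.xs c') = r"
    then have "O.xs (c' + nxt M C (O.xs c')) = O.xs 0"
      using O.tour_corner_next[OF c'E] a_a r_in by simp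
    then show False using O.xs_inj[of "c' + nxt M C (O.xs c')" 0] c''j jN ic' O.N_pos by simp
  qed
  then obtain u v where uv: "c' \<le> u" "Suc u < c' + nxt M C (O.xs c')" "O.sep_pair u v"
    using corner_sep_pair[OF _ _ c'E] ic' c''j jN by fastforce
  have iu: "i < u" and uj: "u < j" using uv ic' c''j by auto
  have iv: "i < v" "v < j" using O.sep_pair_nested[OF sij ij uv(3) iu uj] by simp_all
  have "u \<noteq> v" using uv(3) unfolding O.sep_pair_def by simp
  then consider "u < v" | "v < u" by linarith
  then show False
  proof cases
    case 1
    then show False using minimal[OF uv(3) 1] iu iv by arith
  next
    case 2
    then show False using minimal[OF O.sep_pair_sym[OF uv(3)] 2] iv uj by arith
  qed
qed

end

lemma (in rooted_triangulation) root_candidate_exists: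
  assumes "alg_inv C" and "C \<noteq> full_cplx M"
  shows "root_candidate M r C"
proof (rule ccontr)
  assume "\<not> root_candidate M r C"
  then interpret no_root_candidate M g r C using assms by unfold_locales
  show False by (rule absurd)
qed

theorem lemma3:
  fixes M :: "'d cmap" and g :: nat and r :: 'd
  assumes "triangulation M g" and "r \<in> darts M"
  shows "(\<forall>C. (alg_step M r)\<^sup>*\<^sup>* (init_cplx M r) C \<and> C \<noteq> full_cplx M
              \<longrightarrow> root_candidate M r C)
         \<and> \<not> (\<exists>f. f 0 = init_cplx M r \<and> (\<forall>n. alg_step M r (f n) (f (Suc n))))"
proof -
  interpret rooted_triangulation M g r
    using assms by unfold_locales
  show ?thesis
    using root_candidate_exists alg_inv_reachable alg_termination by blast
qed

end
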